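(* Let $f\in\mathbb{C}[h]$. If $f(h)=wh+(1-w)c$ for some $c\in\mathbb{C}$ and some primitive $l$-th root of unity $w$ ($l\in\mathbb{N}$), then the center of $\mathcal{H}(f)$ is the subalgebra $\mathbb{C}[x^l,y^l,(h-c)^l,z]$ generated by $x^l,y^l,(h-c)^l,z$. Otherwise, the center of $\mathcal{H}(f)$ is $\mathbb{C}[z]$.
   Context: For $f(h)\in\mathbb{C}[h]$, $\mathcal{H}(f)$ is the unital associative $\mathbb{C}$-algebra generated by $x,y,h$ with relations $hx=xf(h)$, $yh=f(h)y$, $yx-xy=f(h)-h$. The element $z:=xy-h=yx-f(h)$ is central in $\mathcal{H}(f)$. *)

theory Defs
  imports Complex_Main "HOL-Computational_Algebra.Polynomial"
begin

text \<open>The algebra H(f) is presented by generators and relations: its elements are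
  formal expressions in the generators x, y, h and complex scalars, and equality in
  H(f) is the least congruence containing the axioms of a unital associative
  C-algebra together with the defining relations of H(f).\<close>

datatype gen = GX | GY | GH

datatype fexpr = Gen gen | Sc complex | Pl fexpr fexpr | Tm fexpr fexpr

abbreviation "ex \<equiv> Gen GX"
abbreviation "ey \<equiv> Gen GY"
abbreviation "eh \<equiv> Gen GH"

definition Ng :: "fexpr \<Rightarrow> fexpr" where
  "Ng e = Tm (Sc (-1)) e"

definition Mn :: "fexpr \<Rightarrow> fexpr \<Rightarrow> fexpr" where
  "Mn a b = Pl a (Ng b)"

fun epow :: "fexpr \<Rightarrow> nat \<Rightarrow> fexpr" where
  "epow e 0 = Sc 1"
| "epow e (Suc n) = Tm e (epow e n)"

definition peval :: "complex poly \<Rightarrow> fexpr \<Rightarrow> fexpr" where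
  "peval p e = foldr (\<lambda>i acc. Pl (Tm (Sc (coeff p i)) (epow e i)) acc) [0..<Suc (degree p)] (Sc 0)"

inductive Heq :: "complex poly \<Rightarrow> fexpr \<Rightarrow> fexpr \<Rightarrow> bool" for f where
  refl: "Heq f a a"
| sym: "Heq f a b \<Longrightarrow> Heq f b a"
| trans: "Heq f a b \<Longrightarrow> Heq f b c \<Longrightarrow> Heq f a c"
| cong_Pl: "Heq f a a' \<Longrightarrow> Heq f b b' \<Longrightarrow> Heq f (Pl a b) (Pl a' b')"
| cong_Tm: "Heq f a a' \<Longrightarrow> Heq f b b' \<Longrightarrow> Heq f (Tm a b) (Tm a' b')"
| add_assoc: "Heq f (Pl (Pl a b) c) (Pl a (Pl b c))"
| add_comm: "Heq f (Pl a b) (Pl b a)"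
| add_zero: "Heq f (Pl (Sc 0) a) a"
| add_neg: "Heq f (Pl a (Ng a)) (Sc 0)"
| mul_assoc: "Heq f (Tm (Tm a b) c) (Tm a (Tm b c))"
| mul_one_l: "Heq f (Tm (Sc 1) a) a"
| mul_one_r: "Heq f (Tm a (Sc 1)) a"
| distrib_l: "Heq f (Tm a (Pl b c)) (Pl (Tm a b) (Tm a c))"
| distrib_r: "Heq f (Tm (Pl a b) c) (Pl (Tm a c) (Tm b c))"
| sc_add: "Heq f (Pl (Sc s) (Sc t)) (Sc (s + t))"
| sc_mul: "Heq f (Tm (Sc s) (Sc t)) (Sc (s * t))"
| sc_central: "Heq f (Tm (Sc s) a) (Tm a (Sc s))"
| rel_hx: "Heq f (Tm eh ex) (Tm ex (peval f eh))"
| rel_yh: "Heq f (Tm ey eh) (Tm (peval f eh) ey)"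
| rel_comm: "Heq f (Mn (Tm ey ex) (Tm ex ey)) (Mn (peval f eh) eh)"

definition ez :: fexpr where
  "ez = Mn (Tm ex ey) eh"

text \<open>The center of H(f), as a (congruence-closed) set of representatives.\<close>
definition center_H :: "complex poly \<Rightarrow> fexpr set" where
  "center_H f = {e. \<forall>b. Heq f (Tm e b) (Tm b e)}"

inductive_set subalg_expr :: "fexpr set \<Rightarrow> fexpr set" for S where
  base: "s \<in> S \<Longrightarrow> s \<in> subalg_expr S"
| scal: "Sc c \<in> subalg_expr S"
| plus: "a \<in> subalg_expr S \<Longrightarrow> b \<in> subalg_expr S \<Longrightarrow> Pl a b \<in> subalg_expr S"
| times: "a \<in> subalg_expr S \<Longrightarrow> b \<in> subalg_expr S \<Longrightarrow> Tm a b \<in> subalg_expr S"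

definition gen_subalg :: "complex poly \<Rightarrow> fexpr set \<Rightarrow> fexpr set" where
  "gen_subalg f S = {e. \<exists>p\<in>subalg_expr S. Heq f e p}"

definition primitive_root :: "complex \<Rightarrow> nat \<Rightarrow> bool" where
  "primitive_root w l \<longleftrightarrow> 0 < l \<and> w ^ l = 1 \<and> (\<forall>k. 0 < k \<and> k < l \<longrightarrow> w ^ k \<noteq> 1)"

end

theory Submission
  imports Defs "HOL-Library.Function_Algebras"
begin

text \<open>
  H(f) acts by left multiplication on arrays (a, b) \<mapsto> q_ab of polynomials, read as normal
  forms \<Sum> x^a q_ab(h) y^b; reading an arbitrary expression back to its normal form shows that
  this representation is faithful, so equality in H(f) is equality of operators. Left and right
  multiplications commute, hence the coefficient array of a central element is fixed by the
  differences of the left and right actions of x, y and h. Comparing coefficients, the top-degree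
  entry q at position (a, b) satisfies q \<circ> f = q and f^[a] = f^[b] (iterated composition).
  Unless f(h) = w h + (1 - w) c with w a primitive l-th root of unity, this forces a = b and q
  constant, the leading term of a multiple of z^a; in the exceptional case it forces l to divide
  a - b and q \<in> \<complex>[(h - c)^l], the leading term of z^b x^(a-b) q or z^a y^(b-a) q.
  Subtracting such leading terms and inducting on the degree identifies the center.
\<close>

section \<open>Linear operators on coefficient arrays\<close>

text \<open>\<open>v a b\<close> is the coefficient q_ab(h) of x^a q_ab(h) y^b in a normal form.\<close>
type_synonym coeff_array = "nat \<Rightarrow> nat \<Rightarrow> complex poly"

definition smult_arr :: "complex \<Rightarrow> coeff_array \<Rightarrow> coeff_array" where
  "smult_arr c v = (\<lambda>a b. smult c (v a b))"

definition lin_map :: "(coeff_array \<Rightarrow> coeff_array) \<Rightarrow> bool" where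
  "lin_map A \<longleftrightarrow> (\<forall>u v. A (u + v) = A u + A v) \<and> (\<forall>c v. A (smult_arr c v) = smult_arr c (A v))"

typedef endo = "{A. lin_map A}"
  morphisms app Abs_endo
  by (rule exI[of _ id]) (simp add: lin_map_def)

setup_lifting type_definition_endo

lemma lin_map_add: "lin_map A \<Longrightarrow> A (u + v) = A u + A v"
  by (simp add: lin_map_def)

lemma lin_map_smult_arr: "lin_map A \<Longrightarrow> A (smult_arr c v) = smult_arr c (A v)"
  by (simp add: lin_map_def)

lemma smult_arr_simps:
  "smult_arr c (u + v) = smult_arr c u + smult_arr c v"
  "smult_arr c (smult_arr d v) = smult_arr (c * d) v"
  "smult_arr (c + d) v = smult_arr c v + smult_arr d v"
  by (auto simp: smult_arr_def fun_eq_iff smult_add_right smult_add_left)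

instantiation endo :: ring_1
begin

lift_definition zero_endo :: endo is "\<lambda>v. 0"
  by (simp add: lin_map_def smult_arr_def fun_eq_iff)
lift_definition one_endo :: endo is "\<lambda>v. v"
  by (simp add: lin_map_def)
lift_definition plus_endo :: "endo \<Rightarrow> endo \<Rightarrow> endo" is "\<lambda>A B v. A v + B v"
  by (simp add: lin_map_def smult_arr_simps add_ac)
lift_definition uminus_endo :: "endo \<Rightarrow> endo" is "\<lambda>A v. - A v"
  by (simp add: lin_map_def smult_arr_def fun_eq_iff)
lift_definition minus_endo :: "endo \<Rightarrow> endo \<Rightarrow> endo" is "\<lambda>A B v. A v - B v"
  by (simp add: lin_map_def smult_arr_def fun_eq_iff smult_diff_right)
lift_definition times_endo :: "endo \<Rightarrow> endo \<Rightarrow> endo" is "\<lambda>A B v. A (B v)"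
  by (simp add: lin_map_def)

instance
proof
  fix a b c :: endo
  show "a * b * c = a * (b * c)" by transfer simp
  show "1 * a = a" by transfer simp
  show "a * 1 = a" by transfer simp
  show "(a + b) * c = a * c + b * c" by transfer simp
  show "a * (b + c) = a * b + a * c" by transfer (simp add: lin_map_add fun_eq_iff)
  show "a + b + c = a + (b + c)" by transfer (simp add: add_ac)
  show "a + b = b + a" by transfer (simp add: add_ac)
  show "0 + a = a" by transfer simp
  show "- a + a = 0" by transfer simp
  show "a - b = a + - b" by transfer simp
  show "(0::endo) \<noteq> 1"
  proof
    assume "(0::endo) = 1"
    then have "app 0 (\<lambda>a b. 1) = app 1 (\<lambda>a b. 1)" by simp
    then have "(0::coeff_array) = (\<lambda>a b. 1)" by (simp add: zero_endo.rep_eq one_endo.rep_eq)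
    then show False by (metis zero_fun_def zero_neq_one)
  qed
qed

end

lemma app_plus [simp]: "app (A + B) v = app A v + app B v" by transfer simp
lemma app_times [simp]: "app (A * B) v = app A (app B v)" by transfer simp
lemma app_one [simp]: "app 1 v = v" by transfer simp
lemma app_zero [simp]: "app 0 v = 0" by transfer simp
lemma app_minus [simp]: "app (A - B) v = app A v - app B v" by transfer simp
lemma app_uminus [simp]: "app (- B) v = - app B v" by transfer simp

lemma app_smult_arr: "app A (smult_arr c v) = smult_arr c (app A v)"
  using app lin_map_smult_arr by blast

lemma endo_eqI: "(\<And>v. app A v = app B v) \<Longrightarrow> A = B"
  by (simp add: app_inject[symmetric] fun_eq_iff)

lift_definition scal :: "complex \<Rightarrow> endo" is smult_arr
  by (simp add: lin_map_def smult_arr_simps mult.commute)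

lemma app_scal: "app (scal c) v = smult_arr c v" by transfer simp

lemma scal_add: "scal s + scal t = scal (s + t)"
  by transfer (simp add: smult_arr_simps fun_eq_iff)
lemma scal_mult: "scal s * scal t = scal (s * t)"
  by transfer (simp add: smult_arr_simps fun_eq_iff)
lemma scal_commute: "scal s * A = A * scal s"
  by (rule endo_eqI) (simp add: app_scal app_smult_arr)
lemma scal_1: "scal 1 = 1"
  by (rule endo_eqI) (simp add: app_scal smult_arr_def)
lemma scal_0: "scal 0 = 0"
  by (rule endo_eqI) (simp add: app_scal smult_arr_def zero_fun_def)
lemma scal_minus_one: "scal (-1) * A = - A"
  by (rule endo_eqI) (simp add: app_scal smult_arr_def fun_eq_iff)

section \<open>The regular representation of H(f)\<close>

fun comp_iter :: "complex poly \<Rightarrow> nat \<Rightarrow> complex poly" where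
  "comp_iter f 0 = [:0, 1:]"
| "comp_iter f (Suc n) = pcompose f (comp_iter f n)"

lemma pcompose_X_left: "pcompose [:0, 1:] q = q" for q :: "'a::comm_semiring_1 poly"
  by (simp add: pcompose_pCons)

lemma comp_iter_Suc': "comp_iter f (Suc n) = pcompose (comp_iter f n) f"
  by (induction n) (simp_all add: pcompose_assoc pcompose_X_left)

lemma pcompose_comp_iter_Suc: "pcompose (comp_iter f n) f = comp_iter f (Suc n)"
  by (simp only: comp_iter_Suc')

lemma pcompose_comp_iter:
  "pcompose (pcompose q f) (comp_iter f n) = pcompose q (comp_iter f (Suc n))"
  by (simp add: pcompose_assoc)

text \<open>Left multiplication by x, y and q(h) in normal-form coordinates, writing f^[a] for
  \<open>comp_iter f a\<close>: it comes from q(h) x^a = x^a q(f^[a](h)) and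
  y x^(a+1) = x^(a+1) y + x^a (f^[a+1](h) - h).\<close>
definition x_act :: "coeff_array \<Rightarrow> coeff_array" where
  "x_act v = (\<lambda>a b. if a = 0 then 0 else v (a - 1) b)"

definition y_act :: "complex poly \<Rightarrow> coeff_array \<Rightarrow> coeff_array" where
  "y_act f v = (\<lambda>a b. (if b = 0 then 0 else pcompose (v a (b - 1)) f)
                     + (comp_iter f (Suc a) - [:0, 1:]) * v (Suc a) b)"

definition p_act :: "complex poly \<Rightarrow> complex poly \<Rightarrow> coeff_array \<Rightarrow> coeff_array" where
  "p_act f q v = (\<lambda>a b. pcompose q (comp_iter f a) * v a b)"

lift_definition X_op :: endo is x_act
  by (auto simp: lin_map_def x_act_def smult_arr_def fun_eq_iff)

lift_definition Y_op :: "complex poly \<Rightarrow> endo" is y_act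
  by (auto simp: lin_map_def y_act_def smult_arr_def fun_eq_iff pcompose_add pcompose_smult
      smult_add_right distrib_left simp del: mult_pCons_left mult_pCons_right)

lift_definition P_op :: "complex poly \<Rightarrow> complex poly \<Rightarrow> endo" is p_act
  by (auto simp: lin_map_def p_act_def smult_arr_def fun_eq_iff algebra_simps)

abbreviation H_op :: "complex poly \<Rightarrow> endo" where
  "H_op f \<equiv> P_op f [:0, 1:]"

lemma app_X_op: "app X_op v = x_act v" by transfer simp
lemma app_Y_op: "app (Y_op f) v = y_act f v" by transfer simp
lemma app_P_op: "app (P_op f q) v = p_act f q v" by transfer simp

lemma P_op_add: "P_op f (p + q) = P_op f p + P_op f q"
  by (rule endo_eqI) (simp add: app_P_op p_act_def pcompose_add fun_eq_iff algebra_simps)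

lemma P_op_mult: "P_op f (p * q) = P_op f p * P_op f q"
  by (rule endo_eqI) (simp add: app_P_op p_act_def pcompose_mult fun_eq_iff algebra_simps)

lemma P_op_const: "P_op f [:a:] = scal a"
  by (rule endo_eqI) (simp add: app_P_op p_act_def app_scal smult_arr_def fun_eq_iff)

lemma P_op_0: "P_op f 0 = 0"
  using P_op_const[of f 0] by (simp add: scal_0)

lemma P_op_1: "P_op f 1 = 1"
  using P_op_const[of f 1] by (simp add: scal_1 one_pCons)

lemma P_op_diff: "P_op f (p - q) = P_op f p - P_op f q"
  using P_op_add[of f "p - q" q] by (simp add: eq_diff_eq)

lemma P_op_power: "P_op f (p ^ n) = P_op f p ^ n"
  by (induction n) (simp_all add: P_op_1 P_op_mult)

lemma P_op_smult: "P_op f (smult c p) = scal c * P_op f p"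
  using P_op_mult[of f "[:c:]" p] by (simp add: P_op_const)

lemma P_op_sum_list: "P_op f (\<Sum>j\<leftarrow>js. g j) = (\<Sum>j\<leftarrow>js. P_op f (g j))"
  by (induction js) (simp_all add: P_op_0 P_op_add)

lemma P_op_commute: "P_op f p * P_op f q = P_op f q * P_op f p"
  by (simp add: P_op_mult[symmetric] mult.commute)

lemma P_op_X: "P_op f q * X_op = X_op * P_op f (pcompose q f)"
proof (rule endo_eqI)
  fix v
  have "pcompose q (comp_iter f a) = pcompose (pcompose q f) (comp_iter f (a - 1))" if "a \<noteq> 0" for a
    using that by (cases a) (simp_all add: pcompose_assoc)
  then show "app (P_op f q * X_op) v = app (X_op * P_op f (pcompose q f)) v"
    by (simp add: app_P_op app_X_op p_act_def x_act_def fun_eq_iff del: comp_iter.simps(2))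
qed

lemma Y_P_op: "Y_op f * P_op f q = P_op f (pcompose q f) * Y_op f"
proof (rule endo_eqI)
  fix v
  have "pcompose (pcompose q (comp_iter f a)) f = pcompose (pcompose q f) (comp_iter f a)" for a
    by (metis comp_iter.simps(2) comp_iter_Suc' pcompose_assoc)
  moreover have "pcompose q (comp_iter f (Suc a)) = pcompose (pcompose q f) (comp_iter f a)" for a
    by (simp add: pcompose_assoc)
  ultimately show "app (Y_op f * P_op f q) v = app (P_op f (pcompose q f) * Y_op f) v"
    by (simp add: app_P_op app_Y_op p_act_def y_act_def fun_eq_iff pcompose_mult algebra_simps
        del: comp_iter.simps(2))
qed

lemma Y_X: "Y_op f * X_op = X_op * Y_op f + P_op f (f - [:0, 1:])"
proof (rule endo_eqI)
  fix v
  have "y_act f (x_act v) a b = x_act (y_act f v) a b + p_act f (f - [:0, 1:]) v a b" for a b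
    by (cases a; cases b)
      (simp_all add: y_act_def x_act_def p_act_def pcompose_diff pcompose_X_left algebra_simps)
  then show "app (Y_op f * X_op) v = app (X_op * Y_op f + P_op f (f - [:0, 1:])) v"
    by (simp add: app_P_op app_Y_op app_X_op fun_eq_iff)
qed

lemma H_X: "H_op f * X_op = X_op * P_op f f"
  using P_op_X[of f "[:0, 1:]"] by (simp add: pcompose_X_left)

lemma Y_H: "Y_op f * H_op f = P_op f f * Y_op f"
  using Y_P_op[of f "[:0, 1:]"] by (simp add: pcompose_X_left)

fun rep :: "complex poly \<Rightarrow> fexpr \<Rightarrow> endo" where
  "rep f (Gen GX) = X_op"
| "rep f (Gen GY) = Y_op f"
| "rep f (Gen GH) = H_op f"
| "rep f (Sc c) = scal c"
| "rep f (Pl a b) = rep f a + rep f b"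
| "rep f (Tm a b) = rep f a * rep f b"

lemma rep_Ng [simp]: "rep f (Ng a) = - rep f a"
  by (simp add: Ng_def scal_minus_one)

lemma rep_Mn [simp]: "rep f (Mn a b) = rep f a - rep f b"
  by (simp add: Mn_def)

lemma rep_epow [simp]: "rep f (epow e n) = rep f e ^ n"
  by (induction n) (simp_all add: scal_1)

definition lin_comb :: "(nat \<Rightarrow> complex) \<Rightarrow> (nat \<Rightarrow> fexpr) \<Rightarrow> nat list \<Rightarrow> fexpr" where
  "lin_comb a E js = foldr (\<lambda>j acc. Pl (Tm (Sc (a j)) (E j)) acc) js (Sc 0)"

lemma rep_lin_comb: "rep f (lin_comb a E js) = (\<Sum>j\<leftarrow>js. scal (a j) * rep f (E j))"
  by (induction js) (simp_all add: lin_comb_def scal_0)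

lemma lin_comb_subalg_expr:
  "(\<And>j. j \<in> set js \<Longrightarrow> E j \<in> subalg_expr S) \<Longrightarrow> lin_comb a E js \<in> subalg_expr S"
  by (induction js) (auto simp: lin_comb_def intro: subalg_expr.intros)

lemma epow_subalg_expr: "e \<in> subalg_expr S \<Longrightarrow> epow e n \<in> subalg_expr S"
  by (induction n) (auto intro: subalg_expr.intros)

lemma sum_smult_coeff_power: "degree q < n \<Longrightarrow> (\<Sum>j<n. smult (coeff q j) (r ^ j)) = pcompose q r"
  for q r :: "'a::comm_semiring_1 poly"
proof (induction q arbitrary: n rule: pCons_induct)
  case 0
  then show ?case by simp
next
  case (pCons a q)
  obtain m where n: "n = Suc m" using pCons.prems by (cases n) auto
  have IH: "(\<Sum>j<m. smult (coeff q j) (r ^ j)) = pcompose q r"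
  proof (cases "q = 0")
    case False
    then show ?thesis using pCons n by simp
  qed simp
  have "(\<Sum>j<n. smult (coeff (pCons a q) j) (r ^ j))
      = [:a:] + (\<Sum>j<m. smult (coeff q j) (r ^ Suc j))"
    unfolding n sum.lessThan_Suc_shift by simp
  also have "\<dots> = [:a:] + r * (\<Sum>j<m. smult (coeff q j) (r ^ j))"
    by (simp only: sum_distrib_left mult_smult_right power_Suc)
  finally show ?case by (simp add: IH pcompose_pCons)
qed

lemma sum_scal_P_op_power:
  "degree q < n \<Longrightarrow> (\<Sum>j\<leftarrow>[0..<n]. scal (coeff q j) * P_op f r ^ j) = P_op f (pcompose q r)"
  by (simp add: P_op_smult[symmetric] P_op_power[symmetric] P_op_sum_list[symmetric]
      sum_set_upt_conv_sum_list_nat[symmetric] atLeast0LessThan sum_smult_coeff_power)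

lemma rep_peval: "rep f (peval p eh) = P_op f p"
proof -
  have "peval p eh = lin_comb (coeff p) (epow eh) [0..<Suc (degree p)]"
    by (simp add: peval_def lin_comb_def)
  then show ?thesis by (simp add: rep_lin_comb sum_scal_P_op_power del: upt_Suc)
qed

lemma rep_sound: "Heq f a b \<Longrightarrow> rep f a = rep f b"
proof (induction rule: Heq.induct)
  case (add_neg a) then show ?case by (simp add: scal_0)
next
  case (sc_add s t) then show ?case by (simp add: scal_add)
next
  case (sc_mul s t) then show ?case by (simp add: scal_mult)
next
  case (sc_central s a) then show ?case by (simp add: scal_commute)
next
  case rel_hx then show ?case by (simp add: rep_peval H_X)
next
  case rel_yh then show ?case by (simp add: rep_peval Y_H)
next
  case rel_comm then show ?case by (simp add: rep_peval Y_X P_op_diff)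
qed (simp_all add: algebra_simps scal_0 scal_1)

section \<open>Normal forms and faithfulness\<close>

fun horner_expr :: "complex list \<Rightarrow> fexpr" where
  "horner_expr [] = Sc 0"
| "horner_expr (a # as) = Pl (Sc a) (Tm eh (horner_expr as))"

definition poly_expr :: "complex poly \<Rightarrow> fexpr" where
  "poly_expr p = horner_expr (coeffs p)"

lemma poly_expr_0 [simp]: "poly_expr 0 = Sc 0"
  by (simp add: poly_expr_def)

text \<open>\<open>nf_expr K N v\<close> is the normal form with coefficients \<open>v a b\<close> for
  \<open>a < N\<close>, \<open>b < K\<close>, written Horner-style in x and in y.\<close>
fun row_expr :: "nat \<Rightarrow> (nat \<Rightarrow> complex poly) \<Rightarrow> fexpr" where
  "row_expr 0 r = Sc 0"
| "row_expr (Suc K) r = Pl (poly_expr (r 0)) (Tm (row_expr K (\<lambda>k. r (Suc k))) ey)"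

fun nf_expr :: "nat \<Rightarrow> nat \<Rightarrow> coeff_array \<Rightarrow> fexpr" where
  "nf_expr K 0 v = Sc 0"
| "nf_expr K (Suc N) v = Pl (row_expr K (v 0)) (Tm ex (nf_expr K N (\<lambda>a. v (Suc a))))"

definition supported :: "nat \<Rightarrow> nat \<Rightarrow> coeff_array \<Rightarrow> bool" where
  "supported K N v \<longleftrightarrow> (\<forall>a b. N \<le> a \<or> K \<le> b \<longrightarrow> v a b = 0)"

lemma supported_x_act: "supported K N v \<Longrightarrow> supported K (Suc N) (x_act v)"
  by (auto simp: supported_def x_act_def)

lemma supported_y_act: "supported K N v \<Longrightarrow> supported (Suc K) N (y_act f v)"
  by (auto simp: supported_def y_act_def)

lemma supported_p_act: "supported K N v \<Longrightarrow> supported K N (p_act f q v)"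
  by (auto simp: supported_def p_act_def)

lemma supported_smult_arr: "supported K N v \<Longrightarrow> supported K N (smult_arr c v)"
  by (auto simp: supported_def smult_arr_def)

lemma supported_mono: "supported K N v \<Longrightarrow> K \<le> K' \<Longrightarrow> N \<le> N' \<Longrightarrow> supported K' N' v"
  by (auto simp: supported_def)

lemma supported_add: "supported K N u \<Longrightarrow> supported K N v \<Longrightarrow> supported K N (u + v)"
  by (auto simp: supported_def)

definition unit_arr :: coeff_array where
  "unit_arr = (\<lambda>a b. if a = 0 \<and> b = 0 then 1 else 0)"

definition nf_coeffs :: "complex poly \<Rightarrow> fexpr \<Rightarrow> coeff_array" where
  "nf_coeffs f e = app (rep f e) unit_arr"

lemma p_act_const: "p_act f [:c:] v = smult_arr c v"
  by (simp add: p_act_def smult_arr_def fun_eq_iff)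

lemma y_act_row_0:
  "y_act f v 0 = (\<lambda>b. (if b = 0 then 0 else pcompose (v 0 (b - 1)) f)
                    + p_act f (f - [:0, 1:]) (\<lambda>a. v (Suc a)) 0 b)"
  by (simp add: fun_eq_iff y_act_def p_act_def pcompose_diff pcompose_X_left)

lemma y_act_rows_Suc:
  "(\<lambda>a. y_act f v (Suc a))
     = y_act f (\<lambda>a. v (Suc a)) + (\<lambda>a. p_act f (f - [:0, 1:]) (\<lambda>a. v (Suc a)) (Suc a))"
  by (simp add: fun_eq_iff y_act_def p_act_def pcompose_diff pcompose_X_left algebra_simps
      del: comp_iter.simps) (simp add: comp_iter_Suc')

context
  fixes f :: "complex poly"
begin

abbreviation Heq_f (infix "\<approx>" 50) where
  "a \<approx> b \<equiv> Heq f a b"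

declare Heq.refl [intro, simp] Heq.trans [trans]

lemma Heq_Pl1: "a \<approx> a' \<Longrightarrow> Pl a b \<approx> Pl a' b"
  by (simp add: Heq.cong_Pl)

lemma Heq_Pl2: "b \<approx> b' \<Longrightarrow> Pl a b \<approx> Pl a b'"
  by (simp add: Heq.cong_Pl)

lemma Heq_Tm1: "a \<approx> a' \<Longrightarrow> Tm a b \<approx> Tm a' b"
  by (simp add: Heq.cong_Tm)

lemma Heq_Tm2: "b \<approx> b' \<Longrightarrow> Tm a b \<approx> Tm a b'"
  by (simp add: Heq.cong_Tm)

lemma Heq_add_zero_right: "Pl a (Sc 0) \<approx> a"
  using Heq.add_comm Heq.add_zero Heq.trans by blast

lemma Heq_Pl_interchange: "Pl (Pl a b) (Pl c d) \<approx> Pl (Pl a c) (Pl b d)"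
proof -
  have "Pl (Pl a b) (Pl c d) \<approx> Pl a (Pl b (Pl c d))" by (rule Heq.add_assoc)
  also have "\<dots> \<approx> Pl a (Pl (Pl b c) d)"
    by (rule Heq_Pl2, rule Heq.sym, rule Heq.add_assoc)
  also have "\<dots> \<approx> Pl a (Pl (Pl c b) d)"
    by (rule Heq_Pl2, rule Heq_Pl1, rule Heq.add_comm)
  also have "\<dots> \<approx> Pl a (Pl c (Pl b d))" by (rule Heq_Pl2, rule Heq.add_assoc)
  also have "\<dots> \<approx> Pl (Pl a c) (Pl b d)" by (rule Heq.sym, rule Heq.add_assoc)
  finally show ?thesis .
qed

lemma Heq_Pl_regroup: "Pl a (Pl c (Pl b d)) \<approx> Pl (Pl a b) (Pl c d)"
proof -
  have "Pl a (Pl c (Pl b d)) \<approx> Pl a (Pl (Pl c b) d)"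
    by (rule Heq_Pl2, rule Heq.sym, rule Heq.add_assoc)
  also have "\<dots> \<approx> Pl a (Pl (Pl b c) d)"
    by (rule Heq_Pl2, rule Heq_Pl1, rule Heq.add_comm)
  also have "\<dots> \<approx> Pl a (Pl b (Pl c d))" by (rule Heq_Pl2, rule Heq.add_assoc)
  also have "\<dots> \<approx> Pl (Pl a b) (Pl c d)" by (rule Heq.sym, rule Heq.add_assoc)
  finally show ?thesis .
qed

lemma Heq_Tm_zero_left: "Tm (Sc 0) a \<approx> Sc 0"
proof -
  let ?t = "Tm (Sc 0) a"
  have s00: "Pl (Sc 0) (Sc 0) \<approx> Sc 0" using Heq.sc_add[of f 0 0] by simp
  have tt: "?t \<approx> Pl ?t ?t"
  proof -
    have "?t \<approx> Tm (Pl (Sc 0) (Sc 0)) a" by (rule Heq_Tm1, rule Heq.sym, rule s00)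
    also have "\<dots> \<approx> Pl ?t ?t" by (rule Heq.distrib_r)
    finally show ?thesis .
  qed
  have "Sc 0 \<approx> Pl ?t (Ng ?t)" by (rule Heq.sym, rule Heq.add_neg)
  also have "\<dots> \<approx> Pl (Pl ?t ?t) (Ng ?t)" by (rule Heq_Pl1, rule tt)
  also have "\<dots> \<approx> Pl ?t (Pl ?t (Ng ?t))" by (rule Heq.add_assoc)
  also have "\<dots> \<approx> Pl ?t (Sc 0)" by (rule Heq_Pl2, rule Heq.add_neg)
  also have "\<dots> \<approx> ?t" by (rule Heq_add_zero_right)
  finally show ?thesis by (rule Heq.sym)
qed

lemma Heq_Tm_zero_right: "Tm a (Sc 0) \<approx> Sc 0"
  using Heq.sc_central[of f 0 a] Heq_Tm_zero_left[of a] by (meson Heq.sym Heq.trans)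

lemma Heq_sc_swap: "Tm (Sc c) (Tm a b) \<approx> Tm a (Tm (Sc c) b)"
proof -
  have "Tm (Sc c) (Tm a b) \<approx> Tm (Tm a b) (Sc c)" by (rule Heq.sc_central)
  also have "\<dots> \<approx> Tm a (Tm b (Sc c))" by (rule Heq.mul_assoc)
  also have "\<dots> \<approx> Tm a (Tm (Sc c) b)"
    by (rule Heq_Tm2, rule Heq.sym, rule Heq.sc_central)
  finally show ?thesis .
qed

lemma poly_expr_pCons: "poly_expr (pCons a p) \<approx> Pl (Sc a) (Tm eh (poly_expr p))"
proof (cases "a = 0 \<and> p = 0")
  case True
  have "Sc 0 \<approx> Tm eh (Sc 0)" by (rule Heq.sym, rule Heq_Tm_zero_right)
  also have "\<dots> \<approx> Pl (Sc 0) (Tm eh (Sc 0))" by (rule Heq.sym, rule Heq.add_zero)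
  finally show ?thesis using True by (simp add: poly_expr_def)
next
  case False
  then have "coeffs (pCons a p) = a # coeffs p" by (auto simp: cCons_def)
  then show ?thesis by (simp add: poly_expr_def)
qed

lemma poly_expr_add: "Pl (poly_expr p) (poly_expr q) \<approx> poly_expr (p + q)"
proof (induction p arbitrary: q rule: pCons_induct)
  case 0
  then show ?case by (simp add: Heq.add_zero)
next
  case (pCons a p)
  obtain b q' where q: "q = pCons b q'" by (rule pCons_cases)
  have "Pl (poly_expr (pCons a p)) (poly_expr q)
      \<approx> Pl (Pl (Sc a) (Tm eh (poly_expr p))) (Pl (Sc b) (Tm eh (poly_expr q')))"
    unfolding q by (rule Heq.cong_Pl; rule poly_expr_pCons)
  also have "\<dots> \<approx> Pl (Pl (Sc a) (Sc b)) (Pl (Tm eh (poly_expr p)) (Tm eh (poly_expr q')))"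
    by (rule Heq_Pl_interchange)
  also have "\<dots> \<approx> Pl (Sc (a + b)) (Tm eh (Pl (poly_expr p) (poly_expr q')))"
    by (rule Heq.cong_Pl, rule Heq.sc_add, rule Heq.sym, rule Heq.distrib_l)
  also have "\<dots> \<approx> Pl (Sc (a + b)) (Tm eh (poly_expr (p + q')))"
    by (rule Heq_Pl2, rule Heq_Tm2, rule pCons.IH)
  also have "\<dots> \<approx> poly_expr (pCons a p + q)"
    unfolding q using Heq.sym[OF poly_expr_pCons[of "a+b" "p+q'"]]
    by simp
  finally show ?case .
qed

lemma poly_expr_smult: "Tm (Sc c) (poly_expr p) \<approx> poly_expr (smult c p)"
proof (induction p rule: pCons_induct)
  case 0
  then show ?case by (simp add: Heq_Tm_zero_right)
next
  case (pCons a p)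
  have "Tm (Sc c) (poly_expr (pCons a p)) \<approx> Tm (Sc c) (Pl (Sc a) (Tm eh (poly_expr p)))"
    by (rule Heq_Tm2, rule poly_expr_pCons)
  also have "\<dots> \<approx> Pl (Tm (Sc c) (Sc a)) (Tm (Sc c) (Tm eh (poly_expr p)))"
    by (rule Heq.distrib_l)
  also have "\<dots> \<approx> Pl (Sc (c * a)) (Tm eh (Tm (Sc c) (poly_expr p)))"
    by (rule Heq.cong_Pl, rule Heq.sc_mul, rule Heq_sc_swap)
  also have "\<dots> \<approx> Pl (Sc (c * a)) (Tm eh (poly_expr (smult c p)))"
    by (rule Heq_Pl2, rule Heq_Tm2, rule pCons.IH)
  also have "\<dots> \<approx> poly_expr (smult c (pCons a p))"
    using Heq.sym[OF poly_expr_pCons[of "c*a" "smult c p"]]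
    by simp
  finally show ?case .
qed

lemma poly_expr_mult: "Tm (poly_expr p) (poly_expr q) \<approx> poly_expr (p * q)"
proof (induction p rule: pCons_induct)
  case 0
  then show ?case by (simp add: Heq_Tm_zero_left)
next
  case (pCons a p)
  have "Tm (poly_expr (pCons a p)) (poly_expr q)
      \<approx> Tm (Pl (Sc a) (Tm eh (poly_expr p))) (poly_expr q)"
    by (rule Heq_Tm1, rule poly_expr_pCons)
  also have "\<dots> \<approx> Pl (Tm (Sc a) (poly_expr q)) (Tm (Tm eh (poly_expr p)) (poly_expr q))"
    by (rule Heq.distrib_r)
  also have "\<dots> \<approx> Pl (poly_expr (smult a q)) (Tm eh (Tm (poly_expr p) (poly_expr q)))"
    by (rule Heq.cong_Pl, rule poly_expr_smult, rule Heq.mul_assoc)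
  also have "\<dots> \<approx> Pl (poly_expr (smult a q)) (Pl (Sc 0) (Tm eh (poly_expr (p * q))))"
    by (rule Heq_Pl2, rule Heq.sym, rule Heq.trans, rule Heq.add_zero, rule Heq_Tm2,
        rule Heq.sym, rule pCons.IH)
  also have "\<dots> \<approx> Pl (poly_expr (smult a q)) (poly_expr (pCons 0 (p * q)))"
    by (rule Heq_Pl2, rule Heq.sym, rule poly_expr_pCons)
  also have "\<dots> \<approx> poly_expr (pCons a p * q)" by (simp add: poly_expr_add)
  finally show ?case .
qed

lemma poly_expr_const: "poly_expr [:c:] \<approx> Sc c"
proof -
  have "poly_expr [:c:] \<approx> Pl (Sc c) (Tm eh (Sc 0))" using poly_expr_pCons[of c 0] by simp
  also have "\<dots> \<approx> Pl (Sc c) (Sc 0)" by (rule Heq_Pl2, rule Heq_Tm_zero_right)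
  also have "\<dots> \<approx> Sc c" by (rule Heq_add_zero_right)
  finally show ?thesis .
qed

lemma poly_expr_X: "poly_expr [:0,1:] \<approx> eh"
proof -
  have "poly_expr [:0,1:] \<approx> Pl (Sc 0) (Tm eh (poly_expr [:1:]))" by (rule poly_expr_pCons)
  also have "\<dots> \<approx> Tm eh (poly_expr [:1:])" by (rule Heq.add_zero)
  also have "\<dots> \<approx> Tm eh (Sc 1)" by (rule Heq_Tm2, rule poly_expr_const)
  also have "\<dots> \<approx> eh" by (rule Heq.mul_one_r)
  finally show ?thesis .
qed

lemma poly_expr_diff: "Mn (poly_expr p) (poly_expr q) \<approx> poly_expr (p - q)"
proof -
  have "Mn (poly_expr p) (poly_expr q) \<approx> Pl (poly_expr p) (poly_expr (smult (-1) q))"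
    unfolding Mn_def Ng_def by (rule Heq_Pl2, rule poly_expr_smult)
  also have "\<dots> \<approx> poly_expr (p + smult (-1) q)" by (rule poly_expr_add)
  finally show ?thesis by simp
qed

lemma lin_comb_zero: "(\<And>j. a j = 0) \<Longrightarrow> lin_comb a E js \<approx> Sc 0"
proof (induction js)
  case Nil
  then show ?case by (simp add: lin_comb_def)
next
  case (Cons j js)
  have "lin_comb a E (j # js) \<approx> Pl (Tm (Sc 0) (E j)) (lin_comb a E js)"
    using Cons.prems by (simp add: lin_comb_def)
  also have "\<dots> \<approx> Pl (Sc 0) (Sc 0)"
    by (rule Heq.cong_Pl, rule Heq_Tm_zero_left, rule Cons.IH, rule Cons.prems)
  also have "\<dots> \<approx> Sc 0"
    by (rule Heq.add_zero)
  finally show ?case .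
qed

lemma lin_comb_coeff_shift: "lin_comb (coeff (pCons a p)) (epow eh) (map Suc xs)
    \<approx> Tm eh (lin_comb (coeff p) (epow eh) xs)"
proof (induction xs)
  case Nil
  then show ?case using Heq.sym[OF Heq_Tm_zero_right[of eh]] by (simp add: lin_comb_def)
next
  case (Cons i xs)
  have "lin_comb (coeff (pCons a p)) (epow eh) (map Suc (i # xs))
      \<approx> Pl (Tm (Sc (coeff p i)) (Tm eh (epow eh i))) (lin_comb (coeff (pCons a p)) (epow eh)
          (map Suc xs))"
    by (simp add: lin_comb_def)
  also have "\<dots> \<approx> Pl (Tm eh (Tm (Sc (coeff p i)) (epow eh i)))
        (Tm eh (lin_comb (coeff p) (epow eh) xs))"
    by (rule Heq.cong_Pl, rule Heq_sc_swap, rule Cons.IH)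
  also have "\<dots> \<approx> Tm eh (lin_comb (coeff p) (epow eh) (i # xs))"
    using Heq.sym[OF Heq.distrib_l[of f eh "Tm (Sc (coeff p i)) (epow eh i)" "lin_comb (coeff p) (epow eh) xs"]]
    by (simp add: lin_comb_def)
  finally show ?case .
qed

lemma lin_comb_coeff_poly_expr: "degree p < n \<Longrightarrow> lin_comb (coeff p) (epow eh) [0..<n] \<approx> poly_expr p"
proof (induction p arbitrary: n rule: pCons_induct)
  case 0
  then show ?case by (simp add: lin_comb_zero)
next
  case (pCons a p)
  obtain m where n: "n = Suc m" using pCons.prems by (cases n) auto
  have ups: "[0..<n] = 0 # map Suc [0..<m]" unfolding n
    by (simp add: upt_conv_Cons map_Suc_upt del: upt_Suc)
  have rec: "lin_comb (coeff p) (epow eh) [0..<m] \<approx> poly_expr p"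
  proof (cases "p = 0")
    case True
    then show ?thesis by (simp add: lin_comb_zero)
  next
    case False
    then have "degree p < m" using pCons.prems n by simp
    then show ?thesis by (rule pCons.IH)
  qed
  have "lin_comb (coeff (pCons a p)) (epow eh) [0..<n]
      \<approx> Pl (Tm (Sc a) (Sc 1)) (lin_comb (coeff (pCons a p)) (epow eh) (map Suc [0..<m]))"
    unfolding ups by (simp add: lin_comb_def)
  also have "\<dots> \<approx> Pl (Sc a) (Tm eh (poly_expr p))"
    by (rule Heq.cong_Pl, rule Heq.mul_one_r, rule Heq.trans, rule lin_comb_coeff_shift,
        rule Heq_Tm2, rule rec)
  also have "\<dots> \<approx> poly_expr (pCons a p)" by (rule Heq.sym, rule poly_expr_pCons)
  finally show ?case .
qed

lemma peval_poly_expr: "peval p eh \<approx> poly_expr p"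
  using lin_comb_coeff_poly_expr[of p "Suc (degree p)"] by (simp add: lin_comb_def peval_def)

lemma poly_expr_x: "Tm (poly_expr q) ex \<approx> Tm ex (poly_expr (pcompose q f))"
proof (induction q rule: pCons_induct)
  case 0
  then show ?case by (simp, meson Heq_Tm_zero_left Heq_Tm_zero_right Heq.sym Heq.trans)
next
  case (pCons a q)
  have "Tm (poly_expr (pCons a q)) ex \<approx> Tm (Pl (Sc a) (Tm eh (poly_expr q))) ex"
    by (rule Heq_Tm1, rule poly_expr_pCons)
  also have "\<dots> \<approx> Pl (Tm (Sc a) ex) (Tm (Tm eh (poly_expr q)) ex)"
    by (rule Heq.distrib_r)
  also have "\<dots> \<approx> Pl (Tm ex (Sc a)) (Tm eh (Tm (poly_expr q) ex))"
    by (rule Heq.cong_Pl, rule Heq.sc_central, rule Heq.mul_assoc)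
  also have "\<dots> \<approx> Pl (Tm ex (Sc a)) (Tm eh (Tm ex (poly_expr (pcompose q f))))"
    by (rule Heq_Pl2, rule Heq_Tm2, rule pCons.IH)
  also have "\<dots> \<approx> Pl (Tm ex (Sc a)) (Tm (Tm eh ex) (poly_expr (pcompose q f)))"
    by (rule Heq_Pl2, rule Heq.sym, rule Heq.mul_assoc)
  also have "\<dots> \<approx> Pl (Tm ex (Sc a)) (Tm (Tm ex (poly_expr f)) (poly_expr (pcompose q f)))"
    by (rule Heq_Pl2, rule Heq_Tm1, rule Heq.trans, rule Heq.rel_hx, rule Heq_Tm2,
        rule peval_poly_expr)
  also have "\<dots> \<approx> Pl (Tm ex (Sc a)) (Tm ex (Tm (poly_expr f) (poly_expr (pcompose q f))))"
    by (rule Heq_Pl2, rule Heq.mul_assoc)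
  also have "\<dots> \<approx> Tm ex (Pl (Sc a) (Tm (poly_expr f) (poly_expr (pcompose q f))))"
    by (rule Heq.sym, rule Heq.distrib_l)
  also have "\<dots> \<approx> Tm ex (poly_expr (pcompose (pCons a q) f))"
  proof (rule Heq_Tm2)
    have "Pl (Sc a) (Tm (poly_expr f) (poly_expr (pcompose q f)))
        \<approx> Pl (poly_expr [:a:]) (poly_expr (f * pcompose q f))"
      by (rule Heq.cong_Pl, rule Heq.sym, rule poly_expr_const, rule poly_expr_mult)
    also have "\<dots> \<approx> poly_expr (pcompose (pCons a q) f)"
      by (simp add: pcompose_pCons poly_expr_add)
    finally show "Pl (Sc a) (Tm (poly_expr f) (poly_expr (pcompose q f)))
        \<approx> poly_expr (pcompose (pCons a q) f)" .
  qed
  finally show ?case .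
qed

lemma y_poly_expr: "Tm ey (poly_expr q) \<approx> Tm (poly_expr (pcompose q f)) ey"
proof (induction q rule: pCons_induct)
  case 0
  then show ?case by (simp, meson Heq_Tm_zero_left Heq_Tm_zero_right Heq.sym Heq.trans)
next
  case (pCons a q)
  have "Tm ey (poly_expr (pCons a q)) \<approx> Tm ey (Pl (Sc a) (Tm eh (poly_expr q)))"
    by (rule Heq_Tm2, rule poly_expr_pCons)
  also have "\<dots> \<approx> Pl (Tm ey (Sc a)) (Tm ey (Tm eh (poly_expr q)))"
    by (rule Heq.distrib_l)
  also have "\<dots> \<approx> Pl (Tm (Sc a) ey) (Tm (Tm ey eh) (poly_expr q))"
    by (rule Heq.cong_Pl, rule Heq.sym, rule Heq.sc_central, rule Heq.sym, rule Heq.mul_assoc)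
  also have "\<dots> \<approx> Pl (Tm (Sc a) ey) (Tm (Tm (poly_expr f) ey) (poly_expr q))"
    by (rule Heq_Pl2, rule Heq_Tm1, rule Heq.trans, rule Heq.rel_yh, rule Heq_Tm1,
        rule peval_poly_expr)
  also have "\<dots> \<approx> Pl (Tm (Sc a) ey) (Tm (poly_expr f) (Tm ey (poly_expr q)))"
    by (rule Heq_Pl2, rule Heq.mul_assoc)
  also have "\<dots> \<approx> Pl (Tm (Sc a) ey) (Tm (poly_expr f) (Tm (poly_expr (pcompose q f)) ey))"
    by (rule Heq_Pl2, rule Heq_Tm2, rule pCons.IH)
  also have "\<dots> \<approx> Pl (Tm (Sc a) ey) (Tm (Tm (poly_expr f) (poly_expr (pcompose q f))) ey)"
    by (rule Heq_Pl2, rule Heq.sym, rule Heq.mul_assoc)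
  also have "\<dots> \<approx> Tm (Pl (Sc a) (Tm (poly_expr f) (poly_expr (pcompose q f)))) ey"
    by (rule Heq.sym, rule Heq.distrib_r)
  also have "\<dots> \<approx> Tm (poly_expr (pcompose (pCons a q) f)) ey"
  proof (rule Heq_Tm1)
    have "Pl (Sc a) (Tm (poly_expr f) (poly_expr (pcompose q f)))
        \<approx> Pl (poly_expr [:a:]) (poly_expr (f * pcompose q f))"
      by (rule Heq.cong_Pl, rule Heq.sym, rule poly_expr_const, rule poly_expr_mult)
    also have "\<dots> \<approx> poly_expr (pcompose (pCons a q) f)"
      by (simp add: pcompose_pCons poly_expr_add)
    finally show "Pl (Sc a) (Tm (poly_expr f) (poly_expr (pcompose q f)))
        \<approx> poly_expr (pcompose (pCons a q) f)" .
  qed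
  finally show ?case .
qed

lemma row_expr_0: "(\<forall>b. r b = 0) \<Longrightarrow> row_expr K r \<approx> Sc 0"
proof (induction K arbitrary: r)
  case 0
  then show ?case by simp
next
  case (Suc K)
  from Suc.prems have r: "r = (\<lambda>b. 0)" by auto
  have "row_expr (Suc K) r \<approx> Pl (Sc 0) (Tm (Sc 0) ey)"
    unfolding r by (simp, rule Heq_Pl2, rule Heq_Tm1, rule Suc.IH, simp)
  also have "\<dots> \<approx> Sc 0" by (rule Heq.trans, rule Heq.add_zero, rule Heq_Tm_zero_left)
  finally show ?case .
qed

lemma row_expr_pad: "(\<forall>b\<ge>K. r b = 0) \<Longrightarrow> K \<le> K' \<Longrightarrow> row_expr K' r \<approx> row_expr K r"
proof (induction K' arbitrary: K r)
  case 0
  then show ?case by simp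
next
  case (Suc K')
  show ?case
  proof (cases K)
    case 0
    have "\<forall>b. r b = 0" using Suc.prems 0 by simp
    then show ?thesis unfolding 0 row_expr.simps(1) by (rule row_expr_0)
  next
    case (Suc K0)
    then show ?thesis using Suc.prems
      by (simp, intro Heq_Pl2 Heq_Tm1 Suc.IH) auto
  qed
qed

lemma row_expr_add: "Pl (row_expr K r) (row_expr K s) \<approx> row_expr K (\<lambda>b. r b + s b)"
proof (induction K arbitrary: r s)
  case 0
  then show ?case by (simp add: Heq.add_zero)
next
  case (Suc K)
  have "Pl (row_expr (Suc K) r) (row_expr (Suc K) s)
      \<approx> Pl (Pl (poly_expr (r 0)) (poly_expr (s 0))) (Pl (Tm (row_expr K (\<lambda>k. r (Suc k))) ey) (Tm
          (row_expr K (\<lambda>k. s (Suc k))) ey))"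
    by (simp add: Heq_Pl_interchange)
  also have "\<dots> \<approx> Pl (poly_expr (r 0 + s 0)) (Tm (row_expr K (\<lambda>k. r (Suc k) + s (Suc k))) ey)"
    by (rule Heq.cong_Pl, rule poly_expr_add, rule Heq.trans, rule Heq.sym, rule Heq.distrib_r,
        rule Heq_Tm1, rule Suc.IH)
  finally show ?case by simp
qed

lemma poly_expr_row_expr: "Tm (poly_expr q) (row_expr K r) \<approx> row_expr K (\<lambda>b. q * r b)"
proof (induction K arbitrary: r)
  case 0
  then show ?case by (simp add: Heq_Tm_zero_right)
next
  case (Suc K)
  have "Tm (poly_expr q) (row_expr (Suc K) r)
      \<approx> Pl (Tm (poly_expr q) (poly_expr (r 0))) (Tm (Tm (poly_expr q) (row_expr K (\<lambda>k. r (Suc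
          k)))) ey)"
    by (simp, rule Heq.trans, rule Heq.distrib_l, rule Heq_Pl2, rule Heq.sym, rule Heq.mul_assoc)
  also have "\<dots> \<approx> Pl (poly_expr (q * r 0)) (Tm (row_expr K (\<lambda>k. q * r (Suc k))) ey)"
    by (rule Heq.cong_Pl, rule poly_expr_mult, rule Heq_Tm1, rule Suc.IH)
  finally show ?case by simp
qed

lemma y_row_expr: "Tm ey (row_expr K r) \<approx> Tm (row_expr K (\<lambda>b. pcompose (r b) f)) ey"
proof (induction K arbitrary: r)
  case 0
  then show ?case by (simp, meson Heq_Tm_zero_left Heq_Tm_zero_right Heq.sym Heq.trans)
next
  case (Suc K)
  have "Tm ey (row_expr (Suc K) r)
      \<approx> Pl (Tm ey (poly_expr (r 0))) (Tm (Tm ey (row_expr K (\<lambda>k. r (Suc k)))) ey)"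
    by (simp, rule Heq.trans, rule Heq.distrib_l, rule Heq_Pl2, rule Heq.sym, rule Heq.mul_assoc)
  also have "\<dots> \<approx> Pl (Tm (poly_expr (pcompose (r 0) f)) ey)
        (Tm (Tm (row_expr K (\<lambda>k. pcompose (r (Suc k)) f)) ey) ey)"
    by (rule Heq.cong_Pl, rule y_poly_expr, rule Heq_Tm1, rule Suc.IH)
  also have "\<dots> \<approx> Tm (row_expr (Suc K) (\<lambda>b. pcompose (r b) f)) ey"
    by (simp, rule Heq.sym, rule Heq.distrib_r)
  finally show ?case .
qed

lemma row_expr_shift: "row_expr (Suc K) (\<lambda>b. if b = 0 then 0 else r (b - 1)) \<approx> Tm (row_expr K r) ey"
  by (simp add: Heq.add_zero)

lemma nf_expr_0: "(\<forall>a b. v a b = 0) \<Longrightarrow> nf_expr K N v \<approx> Sc 0"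
proof (induction N arbitrary: v)
  case 0
  then show ?case by simp
next
  case (Suc N)
  have "nf_expr K (Suc N) v \<approx> Pl (Sc 0) (Tm ex (Sc 0))"
    using Suc.prems by (simp, intro Heq.cong_Pl row_expr_0 Heq_Tm2 Suc.IH) auto
  also have "\<dots> \<approx> Sc 0" by (rule Heq.trans, rule Heq.add_zero, rule Heq_Tm_zero_right)
  finally show ?case .
qed

lemma nf_expr_pad: "supported K N v \<Longrightarrow> K \<le> K' \<Longrightarrow> N \<le> N' \<Longrightarrow> nf_expr K' N' v \<approx> nf_expr K N v"
proof (induction N' arbitrary: N v)
  case 0
  then show ?case by simp
next
  case (Suc N')
  show ?case
  proof (cases N)
    case 0
    then have "\<forall>a b. v a b = 0" using Suc.prems by (simp add: supported_def)
    then show ?thesis unfolding 0 nf_expr.simps(1) by (rule nf_expr_0)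
  next
    case (Suc N0)
    then show ?thesis using Suc.prems
      by (simp, intro Heq.cong_Pl row_expr_pad Heq_Tm2 Suc.IH) (auto simp: supported_def)
  qed
qed

lemma nf_expr_add: "Pl (nf_expr K N u) (nf_expr K N v) \<approx> nf_expr K N (u + v)"
proof (induction N arbitrary: u v)
  case 0
  then show ?case by (simp add: Heq.add_zero)
next
  case (Suc N)
  have "Pl (nf_expr K (Suc N) u) (nf_expr K (Suc N) v)
      \<approx> Pl (Pl (row_expr K (u 0)) (row_expr K (v 0))) (Pl (Tm ex (nf_expr K N (\<lambda>a. u (Suc a))))
          (Tm ex (nf_expr K N (\<lambda>a. v (Suc a)))))"
    by (simp add: Heq_Pl_interchange)
  also have "\<dots> \<approx> Pl (row_expr K (\<lambda>b. u 0 b + v 0 b))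
        (Tm ex (nf_expr K N ((\<lambda>a. u (Suc a)) + (\<lambda>a. v (Suc a)))))"
    by (rule Heq.cong_Pl, rule row_expr_add, rule Heq.trans, rule Heq.sym, rule Heq.distrib_l,
        rule Heq_Tm2, rule Suc.IH)
  finally show ?case by (simp add: plus_fun_def)
qed

lemma poly_expr_nf_expr: "Tm (poly_expr q) (nf_expr K N v) \<approx> nf_expr K N (p_act f q v)"
proof (induction N arbitrary: q v)
  case 0
  then show ?case by (simp add: Heq_Tm_zero_right)
next
  case (Suc N)
  have "Tm (poly_expr q) (nf_expr K (Suc N) v)
      \<approx> Pl (Tm (poly_expr q) (row_expr K (v 0))) (Tm (Tm (poly_expr q) ex) (nf_expr K N (\<lambda>a. v
          (Suc a))))"
    by (simp, rule Heq.trans, rule Heq.distrib_l, rule Heq_Pl2, rule Heq.sym, rule Heq.mul_assoc)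
  also have "\<dots> \<approx> Pl (row_expr K (\<lambda>b. q * v 0 b))
        (Tm (Tm ex (poly_expr (pcompose q f))) (nf_expr K N (\<lambda>a. v (Suc a))))"
    by (rule Heq.cong_Pl, rule poly_expr_row_expr, rule Heq_Tm1, rule poly_expr_x)
  also have "\<dots> \<approx> Pl (row_expr K (\<lambda>b. q * v 0 b))
        (Tm ex (nf_expr K N (p_act f (pcompose q f) (\<lambda>a. v (Suc a)))))"
    by (rule Heq_Pl2, rule Heq.trans, rule Heq.mul_assoc, rule Heq_Tm2, rule Suc.IH)
  also have "\<dots> = nf_expr K (Suc N) (p_act f q v)"
    by (simp add: p_act_def pcompose_assoc)
  finally show ?case .
qed

lemma x_nf_expr: "Tm ex (nf_expr K N v) \<approx> nf_expr K (Suc N) (x_act v)"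
proof -
  have "Tm ex (nf_expr K N v) \<approx> Pl (row_expr K (\<lambda>b. 0)) (Tm ex (nf_expr K N v))"
    by (rule Heq.sym, rule Heq.trans, rule Heq_Pl1, rule row_expr_0, simp, rule Heq.add_zero)
  also have "\<dots> = nf_expr K (Suc N) (x_act v)" by (simp add: x_act_def)
  finally show ?thesis .
qed

lemma yx_eq: "Tm ey ex \<approx> Pl (Tm ex ey) (poly_expr (f - [:0,1:]))"
proof -
  let ?a = "Tm ey ex" and ?b = "Tm ex ey"
  have "?a \<approx> Pl ?a (Sc 0)" by (rule Heq.sym, rule Heq_add_zero_right)
  also have "\<dots> \<approx> Pl ?a (Pl (Ng ?b) ?b)"
    by (rule Heq_Pl2, rule Heq.sym, rule Heq.trans, rule Heq.add_comm, rule Heq.add_neg)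
  also have "\<dots> \<approx> Pl (Mn ?a ?b) ?b"
    unfolding Mn_def by (rule Heq.sym, rule Heq.add_assoc)
  also have "\<dots> \<approx> Pl (Mn (peval f eh) eh) ?b" by (rule Heq_Pl1, rule Heq.rel_comm)
  also have "\<dots> \<approx> Pl (Mn (poly_expr f) (poly_expr [:0,1:])) ?b"
    unfolding Mn_def Ng_def by (rule Heq_Pl1, rule Heq.cong_Pl, rule peval_poly_expr,
        rule Heq_Tm2, rule Heq.sym, rule poly_expr_X)
  also have "\<dots> \<approx> Pl (poly_expr (f - [:0,1:])) ?b"
    by (rule Heq_Pl1, rule poly_expr_diff)
  also have "\<dots> \<approx> Pl ?b (poly_expr (f - [:0,1:]))" by (rule Heq.add_comm)
  finally show ?thesis .
qed

lemma y_nf_expr: "supported K N v \<Longrightarrow> Tm ey (nf_expr K N v) \<approx> nf_expr (Suc K) N (y_act f v)"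
proof (induction N arbitrary: v)
  case 0
  then show ?case by (simp add: Heq_Tm_zero_right)
next
  case (Suc N)
  let ?g = "f - [:0, 1:]"
  define v' where "v' = (\<lambda>a. v (Suc a))"
  have supp_v': "supported K N v'" using Suc.prems by (auto simp: supported_def v'_def)
  then have supp_g: "supported K N (p_act f ?g v')" by (rule supported_p_act)
  let ?R = "row_expr K (v 0)" and ?rest = "nf_expr K N v'"
  let ?A = "nf_expr (Suc K) N (y_act f v')"
  let ?B = "nf_expr (Suc K) N (\<lambda>a. p_act f ?g v' (Suc a))"
  let ?R1 = "row_expr (Suc K) (\<lambda>b. if b = 0 then 0 else pcompose (v 0 (b - 1)) f)"
  let ?R2 = "row_expr (Suc K) (p_act f ?g v' 0)"
  have "Tm ey (nf_expr K (Suc N) v) \<approx> Pl (Tm ey ?R) (Tm (Tm ey ex) ?rest)"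
    by (simp add: v'_def, rule Heq.trans, rule Heq.distrib_l, rule Heq_Pl2, rule Heq.sym,
        rule Heq.mul_assoc)
  also have "\<dots> \<approx> Pl (Tm ey ?R) (Pl (Tm ex (Tm ey ?rest)) (Tm (poly_expr ?g) ?rest))"
    by (rule Heq_Pl2, rule Heq.trans, rule Heq_Tm1, rule yx_eq, rule Heq.trans, rule Heq.distrib_r,
        rule Heq_Pl1, rule Heq.mul_assoc)
  also have "\<dots> \<approx> Pl ?R1 (Pl (Tm ex ?A) (nf_expr K N (p_act f ?g v')))"
    by (rule Heq.cong_Pl, rule Heq.trans, rule y_row_expr, rule Heq.sym, rule row_expr_shift,
        rule Heq.cong_Pl, rule Heq_Tm2, rule Suc.IH, rule supp_v', rule poly_expr_nf_expr)
  also have "\<dots> \<approx> Pl ?R1 (Pl (Tm ex ?A) (Pl ?R2 (Tm ex ?B)))"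
    using Heq.sym[OF nf_expr_pad[OF supp_g, of "Suc K" "Suc N"]] by (intro Heq_Pl2) simp_all
  also have "\<dots> \<approx> Pl (Pl ?R1 ?R2) (Pl (Tm ex ?A) (Tm ex ?B))"
    by (rule Heq_Pl_regroup)
  also have "\<dots> \<approx> Pl (row_expr (Suc K) (\<lambda>b. (if b = 0 then 0 else pcompose (v 0 (b - 1)) f)
                                        + p_act f ?g v' 0 b))
        (Tm ex (nf_expr (Suc K) N (y_act f v' + (\<lambda>a. p_act f ?g v' (Suc a)))))"
    by (rule Heq.cong_Pl, rule row_expr_add, rule Heq.trans, rule Heq.sym, rule Heq.distrib_l,
        rule Heq_Tm2, rule nf_expr_add)
  also have "\<dots> = nf_expr (Suc K) (Suc N) (y_act f v)"
    by (simp only: v'_def y_act_row_0[symmetric] y_act_rows_Suc[symmetric] nf_expr.simps)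
  finally show ?case .
qed

lemma Pl_nf_expr:
  assumes "supported K1 N1 u" "supported K2 N2 v" "A \<approx> nf_expr K1 N1 u" "B \<approx> nf_expr K2 N2 v"
  shows "Pl A B \<approx> nf_expr (max K1 K2) (max N1 N2) (u + v)"
proof -
  have "A \<approx> nf_expr (max K1 K2) (max N1 N2) u"
    using Heq.sym[OF nf_expr_pad[OF assms(1) max.cobounded1 max.cobounded1]] assms(3) by (rule
        Heq.trans[rotated])
  moreover have "B \<approx> nf_expr (max K1 K2) (max N1 N2) v"
    using Heq.sym[OF nf_expr_pad[OF assms(2) max.cobounded2 max.cobounded2]] assms(4) by (rule
        Heq.trans[rotated])
  ultimately have "Pl A B
      \<approx> Pl (nf_expr (max K1 K2) (max N1 N2) u) (nf_expr (max K1 K2) (max N1 N2) v)"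
    by (rule Heq.cong_Pl)
  also have "\<dots> \<approx> nf_expr (max K1 K2) (max N1 N2) (u + v)"
    by (rule nf_expr_add)
  finally show ?thesis .
qed

lemma gen_times_nf_expr:
  assumes "supported K N v"
  shows "\<exists>K' N'. supported K' N' (app (rep f (Gen g)) v)
                \<and> Tm (Gen g) (nf_expr K N v) \<approx> nf_expr K' N' (app (rep f (Gen g)) v)"
proof (cases g)
  case GX
  then show ?thesis
    using supported_x_act[OF assms] x_nf_expr[of K N v] by (auto simp: app_X_op simp del:
        nf_expr.simps)
next
  case GY
  then show ?thesis
    using supported_y_act[OF assms] y_nf_expr[OF assms] by (auto simp: app_Y_op simp del:
        nf_expr.simps)
next
  case GH
  have "Tm eh (nf_expr K N v) \<approx> nf_expr K N (p_act f [:0, 1:] v)"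
    by (rule Heq.trans, rule Heq_Tm1, rule Heq.sym, rule poly_expr_X, rule poly_expr_nf_expr)
  then show ?thesis using GH supported_p_act[OF assms] by (simp add: app_P_op) blast
qed

lemma readback_mult:
  "supported K N v \<Longrightarrow>
     \<exists>K' N'. supported K' N' (app (rep f e) v) \<and> Tm e (nf_expr K N v)
         \<approx> nf_expr K' N' (app (rep f e) v)"
proof (induction e arbitrary: K N v)
  case (Gen g)
  then show ?case by (rule gen_times_nf_expr)
next
  case (Sc c)
  have "Tm (Sc c) (nf_expr K N v) \<approx> nf_expr K N (p_act f [:c:] v)"
    by (rule Heq.trans, rule Heq_Tm1, rule Heq.sym, rule poly_expr_const, rule poly_expr_nf_expr)
  then show ?case using supported_smult_arr[OF Sc] by (simp add: app_scal p_act_const) blast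
next
  case (Pl a b)
  obtain K1 N1 where 1: "supported K1 N1 (app (rep f a) v)"
    "Tm a (nf_expr K N v) \<approx> nf_expr K1 N1 (app (rep f a) v)"
    using Pl.IH(1)[OF Pl.prems] by blast
  obtain K2 N2 where 2: "supported K2 N2 (app (rep f b) v)"
    "Tm b (nf_expr K N v) \<approx> nf_expr K2 N2 (app (rep f b) v)"
    using Pl.IH(2)[OF Pl.prems] by blast
  have "Tm (Pl a b) (nf_expr K N v) \<approx> Pl (Tm a (nf_expr K N v)) (Tm b (nf_expr K N v))"
    by (rule Heq.distrib_r)
  also have "\<dots> \<approx> nf_expr (max K1 K2) (max N1 N2) (app (rep f a) v + app (rep f b) v)"
    by (rule Pl_nf_expr[OF 1(1) 2(1) 1(2) 2(2)])
  finally have "Tm (Pl a b) (nf_expr K N v)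
      \<approx> nf_expr (max K1 K2) (max N1 N2) (app (rep f (Pl a b)) v)"
    by simp
  moreover have "supported (max K1 K2) (max N1 N2) (app (rep f (Pl a b)) v)"
    using supported_add[OF supported_mono[OF 1(1)] supported_mono[OF 2(1)]] by simp
  ultimately show ?case by blast
next
  case (Tm a b)
  obtain K1 N1 where 1: "supported K1 N1 (app (rep f b) v)"
    "Tm b (nf_expr K N v) \<approx> nf_expr K1 N1 (app (rep f b) v)"
    using Tm.IH(2)[OF Tm.prems] by blast
  obtain K2 N2 where 2: "supported K2 N2 (app (rep f a) (app (rep f b) v))"
    "Tm a (nf_expr K1 N1 (app (rep f b) v)) \<approx> nf_expr K2 N2 (app (rep f a) (app (rep f b) v))"
    using Tm.IH(1)[OF 1(1)] by blast
  have "Tm (Tm a b) (nf_expr K N v) \<approx> Tm a (Tm b (nf_expr K N v))"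
    by (rule Heq.mul_assoc)
  also have "\<dots> \<approx> Tm a (nf_expr K1 N1 (app (rep f b) v))"
    by (rule Heq_Tm2, rule 1(2))
  also have "\<dots> \<approx> nf_expr K2 N2 (app (rep f a) (app (rep f b) v))"
    by (rule 2(2))
  finally show ?case using 2(1) by auto
qed

lemma nf_expr_unit: "nf_expr 1 1 unit_arr \<approx> Sc 1"
proof -
  have "nf_expr 1 1 unit_arr = Pl (Pl (poly_expr 1) (Tm (Sc 0) ey)) (Tm ex (Sc 0))"
    by (simp add: unit_arr_def)
  also have "\<dots> \<approx> Pl (Pl (Sc 1) (Sc 0)) (Sc 0)"
    using poly_expr_const[of 1] by (intro Heq.cong_Pl Heq_Tm_zero_left Heq_Tm_zero_right)
      (simp_all add: one_pCons)
  also have "\<dots> \<approx> Sc 1"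
    by (rule Heq.trans, rule Heq_add_zero_right, rule Heq_add_zero_right)
  finally show ?thesis .
qed

lemma readback: "\<exists>K N. supported K N (nf_coeffs f e) \<and> e \<approx> nf_expr K N (nf_coeffs f e)"
proof -
  have "supported 1 1 unit_arr" by (simp add: supported_def unit_arr_def)
  from readback_mult[OF this, of e] obtain K N where
    "supported K N (nf_coeffs f e)" "Tm e (nf_expr 1 1 unit_arr) \<approx> nf_expr K N (nf_coeffs f e)"
    unfolding nf_coeffs_def by blast
  moreover have "e \<approx> Tm e (nf_expr 1 1 unit_arr)"
    by (rule Heq.sym, rule Heq.trans, rule Heq_Tm2, rule nf_expr_unit, rule Heq.mul_one_r)
  ultimately show ?thesis by (meson Heq.trans)
qed

lemma Heq_if_nf_coeffs_eq:
  assumes "nf_coeffs f a = nf_coeffs f b"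
  shows "a \<approx> b"
proof -
  obtain K1 N1 where 1: "supported K1 N1 (nf_coeffs f a)" "a \<approx> nf_expr K1 N1 (nf_coeffs f a)"
    using readback by blast
  obtain K2 N2 where 2: "supported K2 N2 (nf_coeffs f b)" "b \<approx> nf_expr K2 N2 (nf_coeffs f b)"
    using readback by blast
  let ?K = "max K1 K2" and ?N = "max N1 N2"
  have "a \<approx> nf_expr ?K ?N (nf_coeffs f a)"
    by (rule Heq.trans, rule 1(2), rule Heq.sym, rule nf_expr_pad, rule 1(1), simp_all)
  moreover have "b \<approx> nf_expr ?K ?N (nf_coeffs f a)"
    unfolding assms by (rule Heq.trans, rule 2(2), rule Heq.sym, rule nf_expr_pad, rule 2(1),
        simp_all)
  ultimately show ?thesis by (meson Heq.sym Heq.trans)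
qed

end

lemma Heq_iff_rep_eq: "Heq f a b \<longleftrightarrow> rep f a = rep f b"
  using rep_sound Heq_if_nf_coeffs_eq by (metis nf_coeffs_def)

lemma nf_coeffs_inj: "nf_coeffs f a = nf_coeffs f b \<Longrightarrow> rep f a = rep f b"
  using Heq_if_nf_coeffs_eq rep_sound by blast

lemma nf_coeffs_deg_bounded: "\<exists>K N. supported K N (nf_coeffs f e)"
  using readback by blast

section \<open>Central elements\<close>

lemma P_op_X_pow: "P_op f q * X_op ^ n = X_op ^ n * P_op f (pcompose q (comp_iter f n))"
proof (induction n arbitrary: q)
  case 0 then show ?case by simp
next
  case (Suc n)
  have "P_op f q * X_op ^ Suc n = (P_op f q * X_op) * X_op ^ n" by (simp add: mult.assoc)
  also have "\<dots> = X_op * (P_op f (pcompose q f) * X_op ^ n)" by (simp add: P_op_X mult.assoc)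
  also have "\<dots> = X_op ^ Suc n * P_op f (pcompose q (comp_iter f (Suc n)))"
    by (simp add: Suc.IH mult.assoc pcompose_assoc)
  finally show ?case .
qed

lemma comp_iter_diff_telescope:
  "(f - [:0,1:]) + (comp_iter f (Suc (Suc n)) - f) = comp_iter f (Suc (Suc n)) - [:0,1:]"
  by (metis add.commute diff_add_cancel add_diff_eq)

lemma Y_pow_P_op: "Y_op f ^ n * P_op f q = P_op f (pcompose q (comp_iter f n)) * Y_op f ^ n"
proof (induction n arbitrary: q)
  case 0 then show ?case by simp
next
  case (Suc n)
  have "Y_op f ^ Suc n * P_op f q = Y_op f ^ n * (Y_op f * P_op f q)"
    by (simp only: power_Suc2 mult.assoc)
  also have "\<dots> = (Y_op f ^ n * P_op f (pcompose q f)) * Y_op f"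
    by (simp only: Y_P_op mult.assoc)
  also have "\<dots> = P_op f (pcompose q (comp_iter f (Suc n))) * Y_op f ^ Suc n"
    by (simp only: Suc.IH mult.assoc power_Suc2 pcompose_comp_iter)
  finally show ?case .
qed

lemma Y_X_pow:
  "Y_op f * X_op ^ Suc n = X_op ^ Suc n * Y_op f + X_op ^ n * P_op f (comp_iter f (Suc n) - [:0,1:])"
proof (induction n)
  case 0 then show ?case by (simp add: Y_X)
next
  case (Suc n)
  let ?X = X_op and ?Y = "Y_op f"
  have "?Y * ?X ^ Suc (Suc n) = (?Y * ?X ^ Suc n) * ?X"
    by (simp only: mult.assoc power_Suc2[of X_op "Suc n"])
  also have "\<dots> = ?X ^ Suc n * (?Y * ?X) + ?X ^ n * (P_op f (comp_iter f (Suc n) - [:0,1:]) * ?X)"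
    by (simp only: Suc.IH distrib_right mult.assoc)
  also have "\<dots> = ?X ^ Suc n * (?X * ?Y + P_op f (f - [:0,1:])) + ?X ^ n *
        (?X * P_op f (pcompose (comp_iter f (Suc n) - [:0,1:]) f))"
    by (simp only: Y_X P_op_X)
  also have "\<dots> = (?X ^ Suc n * ?X) * ?Y + ?X ^ Suc n * P_op f (f - [:0,1:]) + (?X ^ n * ?X) *
      P_op f (comp_iter f (Suc (Suc n)) - f)"
    by (simp only: distrib_left mult.assoc pcompose_diff pcompose_X_left pcompose_comp_iter_Suc)
  also have "\<dots> = ?X ^ Suc (Suc n) * ?Y + ?X ^ Suc n *
        (P_op f (f - [:0,1:]) + P_op f (comp_iter f (Suc (Suc n)) - f))"
    by (simp only: power_Suc2[symmetric] distrib_left add.assoc)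
  also have "\<dots> = ?X ^ Suc (Suc n) * ?Y + ?X ^ Suc n * P_op f (comp_iter f (Suc (Suc n)) - [:0,1:])"
    by (simp only: P_op_add[symmetric] comp_iter_diff_telescope)
  finally show ?case .
qed

lemma Y_pow_X:
  "Y_op f ^ Suc n * X_op = X_op * Y_op f ^ Suc n + P_op f (comp_iter f (Suc n) - [:0,1:]) * Y_op f ^ n"
proof (induction n)
  case 0 then show ?case by (simp add: Y_X)
next
  case (Suc n)
  let ?X = X_op and ?Y = "Y_op f"
  have "?Y ^ Suc (Suc n) * ?X = ?Y * (?Y ^ Suc n * ?X)" by (simp only: mult.assoc power_Suc)
  also have "\<dots> = (?Y * ?X) * ?Y ^ Suc n + (?Y * P_op f (comp_iter f (Suc n) - [:0,1:])) * ?Y ^ n"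
    by (simp only: Suc.IH distrib_left mult.assoc)
  also have "\<dots> = (?X * ?Y + P_op f (f - [:0,1:])) * ?Y ^ Suc n +
        (P_op f (pcompose (comp_iter f (Suc n) - [:0,1:]) f) * ?Y) * ?Y ^ n"
    by (simp only: Y_X Y_P_op)
  also have "\<dots> = ?X * (?Y * ?Y ^ Suc n) + P_op f (f - [:0,1:]) * ?Y ^ Suc n
        + P_op f (comp_iter f (Suc (Suc n)) - f) * (?Y * ?Y ^ n)"
    by (simp only: distrib_right mult.assoc pcompose_diff pcompose_X_left pcompose_comp_iter_Suc)
  also have "\<dots> = ?X * ?Y ^ Suc (Suc n) +
        (P_op f (f - [:0,1:]) + P_op f (comp_iter f (Suc (Suc n)) - f)) * ?Y ^ Suc n"
    by (simp only: power_Suc[symmetric] distrib_right add.assoc)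
  also have "\<dots> = ?X * ?Y ^ Suc (Suc n) + P_op f (comp_iter f (Suc (Suc n)) - [:0,1:]) * ?Y ^ Suc n"
    by (simp only: P_op_add[symmetric] comp_iter_diff_telescope)
  finally show ?case .
qed


abbreviation Z_op :: "complex poly \<Rightarrow> endo" where
  "Z_op f \<equiv> X_op * Y_op f - H_op f"

lemma rep_ez: "rep f ez = Z_op f"
  by (simp add: ez_def)

definition central :: "complex poly \<Rightarrow> endo \<Rightarrow> bool" where
  "central f A \<longleftrightarrow> A * X_op = X_op * A \<and> A * Y_op f = Y_op f * A \<and> A * H_op f = H_op f * A"

lemma central_commute: "central f A \<Longrightarrow> A * rep f b = rep f b * A"
proof (induction b)
  case (Gen g) then show ?case by (cases g) (auto simp: central_def)
next
  case (Sc c) then show ?case by (simp add: scal_commute)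
next
  case (Pl a b) then show ?case by (simp add: algebra_simps)
next
  case (Tm a b)
  have a: "A * rep f a = rep f a * A" and b: "A * rep f b = rep f b * A" using Tm by blast+
  have "A * rep f (Tm a b) = (A * rep f a) * rep f b" by (simp add: mult.assoc)
  also have "\<dots> = rep f a * (A * rep f b)" by (simp only: a mult.assoc)
  also have "\<dots> = rep f (Tm a b) * A" by (simp add: b mult.assoc)
  finally show ?case .
qed

lemma center_H_eq: "center_H f = {e. central f (rep f e)}"
proof -
  have "e \<in> center_H f \<longleftrightarrow> central f (rep f e)" for e
  proof
    assume "e \<in> center_H f"
    then have "\<forall>b. rep f e * rep f b = rep f b * rep f e"
      by (auto simp: center_H_def Heq_iff_rep_eq)
    then show "central f (rep f e)" unfolding central_def by (metis rep.simps(1,2,3))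
  next
    assume "central f (rep f e)"
    then show "e \<in> center_H f" by (simp add: center_H_def Heq_iff_rep_eq central_commute)
  qed
  then show ?thesis by blast
qed

lemma gen_subalg_eq: "gen_subalg f S = {e. \<exists>p\<in>subalg_expr S. rep f e = rep f p}"
  by (auto simp: gen_subalg_def Heq_iff_rep_eq)

lemma central_add: "central f A \<Longrightarrow> central f B \<Longrightarrow> central f (A + B)"
  by (simp add: central_def algebra_simps)

lemma central_diff: "central f A \<Longrightarrow> central f B \<Longrightarrow> central f (A - B)"
  by (simp add: central_def algebra_simps)

lemma central_mult: "central f A \<Longrightarrow> central f B \<Longrightarrow> central f (A * B)"
  by (simp add: central_def mult.assoc) (metis mult.assoc)

lemma central_scal: "central f (scal c)" by (simp add: central_def scal_commute)

lemma central_power: "central f A \<Longrightarrow> central f (A ^ n)"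
  by (induction n) (simp_all add: central_mult, simp add: central_def)

lemma central_subalg: "p \<in> subalg_expr S \<Longrightarrow> (\<And>s. s \<in> S \<Longrightarrow> central f (rep f s)) \<Longrightarrow> central f (rep f p)"
  by (induction rule: subalg_expr.induct) (auto simp: central_scal central_add central_mult)

lemma central_Z: "central f (Z_op f)"
proof -
  have YX: "Y_op f * X_op = X_op * Y_op f + P_op f f - H_op f"
    using Y_X[of f] by (simp add: P_op_diff)
  have HX: "H_op f * X_op = X_op * P_op f f" by (rule H_X)
  have YH: "Y_op f * H_op f = P_op f f * Y_op f" by (rule Y_H)
  have ZX: "Z_op f * X_op = X_op * Z_op f"
  proof -
    have "Z_op f * X_op = X_op * (Y_op f * X_op) - H_op f * X_op" by (simp add: algebra_simps)
    also have "\<dots> = X_op * (X_op * Y_op f) - X_op * H_op f" by (simp add: YX HX algebra_simps)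
    finally show ?thesis by (simp add: algebra_simps)
  qed
  have ZY: "Z_op f * Y_op f = Y_op f * Z_op f"
  proof -
    have "Y_op f * Z_op f = (Y_op f * X_op) * Y_op f - Y_op f * H_op f" by (simp add: algebra_simps)
    also have "\<dots> = X_op * Y_op f * Y_op f - H_op f * Y_op f"
      by (simp add: YX YH algebra_simps)
    finally show ?thesis by (simp add: algebra_simps)
  qed
  have ZH: "Z_op f * H_op f = H_op f * Z_op f"
  proof -
    have "Z_op f * H_op f = X_op * (Y_op f * H_op f) - H_op f * H_op f" by (simp add: algebra_simps)
    also have "\<dots> = (H_op f * X_op) * Y_op f - H_op f * H_op f"
      by (simp add: YH HX algebra_simps)
    finally show ?thesis by (simp add: algebra_simps)
  qed
  show ?thesis using ZX ZY ZH by (simp add: central_def)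
qed

text \<open>Right multiplication by x, y and h in normal-form coordinates, from
  y^(b+1) x = x y^(b+1) + (f^[b+1](h) - h) y^b and y^b h = f^[b](h) y^b.\<close>
definition x_ract :: "complex poly \<Rightarrow> coeff_array \<Rightarrow> coeff_array" where
  "x_ract f v = (\<lambda>a b. (if a = 0 then 0 else pcompose (v (a - 1) b) f)
                      + v a (Suc b) * (comp_iter f (Suc b) - [:0, 1:]))"

definition y_ract :: "coeff_array \<Rightarrow> coeff_array" where
  "y_ract v = (\<lambda>a b. if b = 0 then 0 else v a (b - 1))"

definition h_ract :: "complex poly \<Rightarrow> coeff_array \<Rightarrow> coeff_array" where
  "h_ract f v = (\<lambda>a b. v a b * comp_iter f b)"

lemma x_ract_add: "x_ract f (u + v) = x_ract f u + x_ract f v"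
  by (simp add: x_ract_def fun_eq_iff pcompose_add algebra_simps)

lemma y_ract_add: "y_ract (u + v) = y_ract u + y_ract v"
  by (simp add: y_ract_def fun_eq_iff)

lemma h_ract_add: "h_ract f (u + v) = h_ract f u + h_ract f v"
  by (simp add: h_ract_def fun_eq_iff algebra_simps)

lemma x_ract_smult: "x_ract f (smult_arr c v) = smult_arr c (x_ract f v)"
  by (simp add: x_ract_def smult_arr_def fun_eq_iff pcompose_smult smult_add_right)

lemma y_ract_smult: "y_ract (smult_arr c v) = smult_arr c (y_ract v)"
  by (simp add: y_ract_def smult_arr_def fun_eq_iff)

lemma h_ract_smult: "h_ract f (smult_arr c v) = smult_arr c (h_ract f v)"
  by (simp add: h_ract_def smult_arr_def fun_eq_iff)

lemma x_ract_x_act: "x_ract f (x_act v) = x_act (x_ract f v)"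
  by (simp add: x_ract_def x_act_def fun_eq_iff)

lemma x_ract_p_act: "x_ract f (p_act f q v) = p_act f q (x_ract f v)"
proof -
  have "x_ract f (p_act f q v) a b = p_act f q (x_ract f v) a b" for a b
    by (cases a) (simp_all add: x_ract_def p_act_def pcompose_mult pcompose_assoc[symmetric]
        pcompose_comp_iter_Suc algebra_simps
        del: comp_iter.simps)
  then show ?thesis by (simp add: fun_eq_iff)
qed

lemma x_ract_y_act: "x_ract f (y_act f v) = y_act f (x_ract f v)"
proof -
  have "x_ract f (y_act f v) a b = y_act f (x_ract f v) a b" for a b
  proof -
    let ?Z = "if a = 0 \<or> b = 0 then 0 else pcompose (pcompose (v (a - 1) (b - 1)) f) f"
    let ?B = "pcompose (v a b) f" and ?C = "v (Suc a) (Suc b)" and ?X = "[:0,1:] :: complex poly"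
    have y1: "y_act f v a (Suc b) = ?B + (comp_iter f (Suc a) - ?X) * ?C"
      by (simp add: y_act_def del: comp_iter.simps)
    have r1: "x_ract f v (Suc a) b = ?B + ?C * (comp_iter f (Suc b) - ?X)"
      by (simp add: x_ract_def del: comp_iter.simps)
    have y0: "(if a = 0 then 0 else pcompose (y_act f v (a - 1) b) f)
        = ?Z + (comp_iter f (Suc a) - f) * ?B"
    proof (cases a)
      case 0 then show ?thesis by simp
    next
      case (Suc n)
      then show ?thesis
        by (simp add: y_act_def pcompose_add pcompose_mult pcompose_diff pcompose_X_left
            pcompose_comp_iter_Suc del: comp_iter.simps)
    qed
    have r0: "(if b = 0 then 0 else pcompose (x_ract f v a (b - 1)) f)
        = ?Z + ?B * (comp_iter f (Suc b) - f)"
    proof (cases b)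
      case 0 then show ?thesis by simp
    next
      case (Suc n)
      then show ?thesis
        by (simp add: x_ract_def pcompose_add pcompose_mult pcompose_diff pcompose_X_left
            pcompose_comp_iter_Suc del: comp_iter.simps)
    qed
    have "x_ract f (y_act f v) a b
        = (if a = 0 then 0 else pcompose (y_act f v (a - 1) b) f)
          + y_act f v a (Suc b) * (comp_iter f (Suc b) - ?X)"
      by (simp add: x_ract_def del: comp_iter.simps)
    also have "\<dots> = (?Z + (comp_iter f (Suc a) - f) * ?B)
        + (?B + (comp_iter f (Suc a) - ?X) * ?C) * (comp_iter f (Suc b) - ?X)"
      by (simp only: y0 y1)
    also have "\<dots> = (?Z + ?B * (comp_iter f (Suc b) - f))
        + (comp_iter f (Suc a) - ?X) * (?B + ?C * (comp_iter f (Suc b) - ?X))"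
      by (simp only: algebra_simps)
    also have "\<dots> = (if b = 0 then 0 else pcompose (x_ract f v a (b - 1)) f)
        + (comp_iter f (Suc a) - ?X) * x_ract f v (Suc a) b"
      by (simp only: r0 r1)
    also have "\<dots> = y_act f (x_ract f v) a b" by (simp add: y_act_def del: comp_iter.simps)
    finally show ?thesis .
  qed
  then show ?thesis by (simp add: fun_eq_iff)
qed

lemma y_ract_x_act: "y_ract (x_act v) = x_act (y_ract v)"
  by (simp add: y_ract_def x_act_def fun_eq_iff)

lemma y_ract_p_act: "y_ract (p_act f q v) = p_act f q (y_ract v)"
  by (simp add: y_ract_def p_act_def fun_eq_iff)

lemma y_ract_y_act: "y_ract (y_act f v) = y_act f (y_ract v)"
  by (simp add: y_ract_def y_act_def fun_eq_iff)

lemma h_ract_x_act: "h_ract f (x_act v) = x_act (h_ract f v)"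
  by (simp add: h_ract_def x_act_def fun_eq_iff)

lemma h_ract_p_act: "h_ract f (p_act f q v) = p_act f q (h_ract f v)"
  by (simp add: h_ract_def p_act_def fun_eq_iff algebra_simps)

lemma h_ract_y_act: "h_ract f (y_act f v) = y_act f (h_ract f v)"
proof -
  have "h_ract f (y_act f v) a b = y_act f (h_ract f v) a b" for a b
    by (cases b) (simp_all add: h_ract_def y_act_def pcompose_mult pcompose_comp_iter_Suc
        distrib_right mult.assoc del: comp_iter.simps)
  then show ?thesis by (simp add: fun_eq_iff)
qed

lemma rep_x_ract: "app (rep f e) (x_ract f v) = x_ract f (app (rep f e) v)"
proof (induction e arbitrary: v)
  case (Gen g) then show ?case by (cases g) (simp_all add: app_X_op app_Y_op app_P_op
      x_ract_x_act x_ract_y_act x_ract_p_act)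
qed (simp_all add: app_scal x_ract_smult x_ract_add)

lemma rep_y_ract: "app (rep f e) (y_ract v) = y_ract (app (rep f e) v)"
proof (induction e arbitrary: v)
  case (Gen g) then show ?case by (cases g) (simp_all add: app_X_op app_Y_op app_P_op
      y_ract_x_act y_ract_y_act y_ract_p_act)
qed (simp_all add: app_scal y_ract_smult y_ract_add)

lemma rep_h_ract: "app (rep f e) (h_ract f v) = h_ract f (app (rep f e) v)"
proof (induction e arbitrary: v)
  case (Gen g) then show ?case by (cases g) (simp_all add: app_X_op app_Y_op app_P_op
      h_ract_x_act h_ract_y_act h_ract_p_act)
qed (simp_all add: app_scal h_ract_smult h_ract_add)

lemma x_act_unit: "x_act unit_arr = x_ract f unit_arr"
  by (simp add: x_act_def x_ract_def unit_arr_def fun_eq_iff pcompose_1)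

lemma y_act_unit: "y_act f unit_arr = y_ract unit_arr"
  by (simp add: y_act_def y_ract_def unit_arr_def fun_eq_iff pcompose_1)

lemma h_act_unit: "p_act f [:0,1:] unit_arr = h_ract f unit_arr"
  by (simp add: p_act_def h_ract_def unit_arr_def fun_eq_iff)

lemma nf_coeffs_ex_times: "nf_coeffs f (Tm ex e) = x_act (nf_coeffs f e)"
  by (simp add: nf_coeffs_def app_X_op)

lemma nf_coeffs_times_ex: "nf_coeffs f (Tm e ex) = x_ract f (nf_coeffs f e)"
  by (simp add: nf_coeffs_def app_X_op x_act_unit[of f] rep_x_ract)

lemma nf_coeffs_ey_times: "nf_coeffs f (Tm ey e) = y_act f (nf_coeffs f e)"
  by (simp add: nf_coeffs_def app_Y_op)

lemma nf_coeffs_times_ey: "nf_coeffs f (Tm e ey) = y_ract (nf_coeffs f e)"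
  by (simp add: nf_coeffs_def app_Y_op y_act_unit rep_y_ract)

lemma nf_coeffs_eh_times: "nf_coeffs f (Tm eh e) = p_act f [:0, 1:] (nf_coeffs f e)"
  by (simp add: nf_coeffs_def app_P_op)

lemma nf_coeffs_times_eh: "nf_coeffs f (Tm e eh) = h_ract f (nf_coeffs f e)"
  by (simp add: nf_coeffs_def app_P_op h_act_unit rep_h_ract)

lemma central_coeff_eqs:
  assumes "central f (rep f e)"
  defines "v \<equiv> nf_coeffs f e"
  shows "v a b = pcompose (v a b) f + v (Suc a) (Suc b) * (comp_iter f (Suc b) - [:0, 1:])"
    and "v 0 (Suc b) * (comp_iter f (Suc b) - [:0, 1:]) = 0"
    and "(comp_iter f (Suc a) - [:0, 1:]) * v (Suc a) 0 = 0"
    and "comp_iter f a * v a b = v a b * comp_iter f b"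
proof -
  have "nf_coeffs f (Tm ex e) = nf_coeffs f (Tm e ex)"
    "nf_coeffs f (Tm ey e) = nf_coeffs f (Tm e ey)"
    "nf_coeffs f (Tm eh e) = nf_coeffs f (Tm e eh)"
    using assms(1) by (simp_all add: nf_coeffs_def central_def)
  then have x: "x_act v = x_ract f v" and y: "y_act f v = y_ract v" and h: "p_act f [:0, 1:] v =
      h_ract f v"
    by (simp_all add: v_def nf_coeffs_ex_times nf_coeffs_times_ex nf_coeffs_ey_times
        nf_coeffs_times_ey
        nf_coeffs_eh_times nf_coeffs_times_eh)
  show "v a b = pcompose (v a b) f + v (Suc a) (Suc b) * (comp_iter f (Suc b) - [:0, 1:])"
    using fun_cong[OF fun_cong[OF x, of "Suc a"], of b]
      by (simp add: x_act_def x_ract_def del: comp_iter.simps)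
  show "v 0 (Suc b) * (comp_iter f (Suc b) - [:0, 1:]) = 0"
    using fun_cong[OF fun_cong[OF x, of 0], of b] by (simp add: x_act_def x_ract_def del:
        comp_iter.simps)
  show "(comp_iter f (Suc a) - [:0, 1:]) * v (Suc a) 0 = 0"
    using fun_cong[OF fun_cong[OF y, of a], of 0] by (simp add: y_act_def y_ract_def del:
        comp_iter.simps)
  show "comp_iter f a * v a b = v a b * comp_iter f b"
    using fun_cong[OF fun_cong[OF h, of a], of b] by (simp add: p_act_def h_ract_def
        pcompose_X_left)
qed

definition deg_le :: "nat \<Rightarrow> coeff_array \<Rightarrow> bool" where
  "deg_le T v \<longleftrightarrow> (\<forall>a b. T < a + b \<longrightarrow> v a b = 0)"

lemma supported_deg_le:
  assumes "supported K N v"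
  shows "deg_le (K + N) v"
proof (unfold deg_le_def, intro allI impI)
  fix a b
  assume "K + N < a + b"
  then have "N \<le> a \<or> K \<le> b" by linarith
  then show "v a b = 0" using assms unfolding supported_def by blast
qed

lemma nf_coeffs_deg_le: "\<exists>T. deg_le T (nf_coeffs f e)"
  using nf_coeffs_deg_bounded supported_deg_le by blast

section \<open>Peeling off leading terms\<close>

definition single_arr :: "nat \<Rightarrow> nat \<Rightarrow> complex poly \<Rightarrow> coeff_array" where
  "single_arr a0 b0 p = (\<lambda>a b. if a = a0 \<and> b = b0 then p else 0)"

definition lead_term :: "nat \<Rightarrow> nat \<Rightarrow> complex poly \<Rightarrow> coeff_array \<Rightarrow> bool" where
  "lead_term T a0 p w \<longleftrightarrow> a0 \<le> T \<and> deg_le T w \<and> (\<forall>a b. a + b = T \<longrightarrow> w a b = (if a = a0 then p else 0))"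

lemma lead_term_single: "lead_term (a0 + b0) a0 p (single_arr a0 b0 p)"
  by (auto simp: lead_term_def deg_le_def single_arr_def)

lemma lead_term_Z:
  assumes t: "lead_term T a0 p w" and pf: "pcompose p f = p"
  shows "lead_term (T + 2) (Suc a0) p (app (Z_op f) w)"
proof -
  have tw: "w a b = 0" if "T < a + b" for a b using t that by (auto simp: lead_term_def deg_le_def)
  have Zw: "app (Z_op f) w a b =
        (if a = 0 then 0 else (if b = 0 then 0 else pcompose (w (a - 1) (b - 1)) f)
        + (comp_iter f a - [:0,1:]) * w a b) - comp_iter f a * w a b" for a b
    by (cases a) (simp_all add: app_X_op app_Y_op app_P_op x_act_def y_act_def p_act_def
        pcompose_X_left)
  have "deg_le (T + 2) (app (Z_op f) w)"
    unfolding deg_le_def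
  proof (intro allI impI)
    fix a b assume "T + 2 < a + b"
    then show "app (Z_op f) w a b = 0" by (simp only: Zw) (simp add: tw)
  qed
  moreover have "app (Z_op f) w a b = (if a = Suc a0 then p else 0)" if "a + b = T + 2" for a b
  proof -
    have wab: "w a b = 0" using that by (simp add: tw)
    show ?thesis
    proof (cases "a = 0 \<or> b = 0")
      case True
      have "a \<noteq> Suc a0"
      proof
        assume "a = Suc a0"
        then show False using True that t by (auto simp: lead_term_def)
      qed
      then show ?thesis using True by (simp only: Zw) (auto simp: wab)
    next
      case False
      then have "(a - 1) + (b - 1) = T" using that by auto
      then have "w (a - 1) (b - 1) = (if a - 1 = a0 then p else 0)"
        using t by (auto simp: lead_term_def)
      then show ?thesis using False by (simp only: Zw) (auto simp: wab pf)
    qed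
  qed
  moreover have "Suc a0 \<le> T + 2" using t by (simp add: lead_term_def)
  ultimately show ?thesis by (simp add: lead_term_def)
qed

lemma lead_term_Z_pow: "lead_term T a0 p w \<Longrightarrow> pcompose p f = p \<Longrightarrow> lead_term (T + 2 * n) (a0 + n) p
    (app (Z_op f ^ n) w)"
proof (induction n)
  case 0 then show ?case by simp
next
  case (Suc n)
  have "lead_term (T + 2 * n + 2) (Suc (a0 + n)) p (app (Z_op f) (app (Z_op f ^ n) w))"
    using lead_term_Z[OF Suc.IH[OF Suc.prems] Suc.prems(2)] .
  moreover have "T + 2 * Suc n = T + 2 * n + 2" "a0 + Suc n = Suc (a0 + n)" by simp_all
  ultimately show ?case by (simp only: power_Suc app_times)
qed

lemma app_X_pow: "app (X_op ^ m) w = (\<lambda>a b. if m \<le> a then w (a - m) b else 0)"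
proof (induction m)
  case 0 then show ?case by (simp add: fun_eq_iff)
next
  case (Suc m)
  have "app (X_op ^ Suc m) w = x_act (app (X_op ^ m) w)" by (simp add: app_X_op)
  then show ?case by (auto simp: Suc.IH x_act_def fun_eq_iff Suc_le_eq)
qed

lemma app_X_pow_single: "app (X_op ^ m) (single_arr a0 b0 p) = single_arr (a0 + m) b0 p"
  by (auto simp: app_X_pow single_arr_def fun_eq_iff)

lemma app_Y_single: "app (Y_op f) (single_arr 0 j p) = single_arr 0 (Suc j) (pcompose p f)"
  by (auto simp: app_Y_op y_act_def single_arr_def fun_eq_iff)

lemma app_Y_pow_single: "pcompose p f = p \<Longrightarrow> app (Y_op f ^ m) (single_arr 0 0 p) = single_arr 0 m p"
  by (induction m) (simp_all add: app_Y_single)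

lemma app_P_op_unit: "app (P_op f p) unit_arr = single_arr 0 0 p"
  by (auto simp: app_P_op p_act_def unit_arr_def single_arr_def fun_eq_iff)

lemma lead_term_Z_pow_X_pow_P_op:
  assumes "pcompose p f = p"
  shows "lead_term (m + 2 * k) (m + k) p (app (Z_op f ^ k * X_op ^ m * P_op f p) unit_arr)"
  using lead_term_Z_pow[OF lead_term_single[of m 0 p] assms, of k] by (simp add: app_P_op_unit
      app_X_pow_single)

lemma lead_term_Z_pow_Y_pow_P_op:
  assumes "pcompose p f = p"
  shows "lead_term (m + 2 * k) k p (app (Z_op f ^ k * Y_op f ^ m * P_op f p) unit_arr)"
  using lead_term_Z_pow[OF lead_term_single[of 0 m p] assms, of k]
  by (simp add: app_P_op_unit app_Y_pow_single[OF assms])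

definition realizes_lead_terms :: "complex poly \<Rightarrow> fexpr set \<Rightarrow> bool" where
  "realizes_lead_terms f S \<longleftrightarrow>
     (\<forall>e T i. central f (rep f e) \<and> deg_le T (nf_coeffs f e) \<and> i \<le> T \<and> nf_coeffs f e i (T - i) \<noteq> 0
        \<longrightarrow> (\<exists>M\<in>subalg_expr S. central f (rep f M)
               \<and> lead_term T i (nf_coeffs f e i (T - i)) (nf_coeffs f M)))"

lemma nf_coeffs_Mn: "nf_coeffs f (Mn a b) = nf_coeffs f a - nf_coeffs f b"
  by (simp add: nf_coeffs_def)

lemma clear_antidiagonal:
  assumes H: "realizes_lead_terms f S" and ce: "central f (rep f e)"
    and deg: "deg_le T (nf_coeffs f e)"
  shows "\<exists>p\<in>subalg_expr S. central f (rep f p) \<and> deg_le T (nf_coeffs f (Mn e p))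
            \<and> (\<forall>i<j. i \<le> T \<longrightarrow> nf_coeffs f (Mn e p) i (T - i) = 0)"
proof (induction j)
  case 0
  have "nf_coeffs f (Mn e (Sc 0)) = nf_coeffs f e"
    by (simp add: nf_coeffs_Mn nf_coeffs_def scal_0)
  then show ?case
    using deg central_scal[of f 0] by (intro bexI[of _ "Sc 0"]) (auto intro: subalg_expr.scal)
next
  case (Suc j)
  then obtain p where p: "p \<in> subalg_expr S" "central f (rep f p)"
    and deg_p: "deg_le T (nf_coeffs f (Mn e p))"
    and below_j: "\<forall>i<j. i \<le> T \<longrightarrow> nf_coeffs f (Mn e p) i (T - i) = 0"
    by blast
  let ?v = "nf_coeffs f (Mn e p)"
  show ?case
  proof (cases "j \<le> T \<and> ?v j (T - j) \<noteq> 0")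
    case False
    then show ?thesis using p deg_p below_j less_Suc_eq by blast
  next
    case True
    have "central f (rep f (Mn e p))" using ce p(2) by (simp add: central_diff)
    then obtain M where M: "M \<in> subalg_expr S" "central f (rep f M)"
      and lead: "lead_term T j (?v j (T - j)) (nf_coeffs f M)"
      using H deg_p True unfolding realizes_lead_terms_def by blast
    have v': "nf_coeffs f (Mn e (Pl p M)) = ?v - nf_coeffs f M"
      by (simp add: nf_coeffs_Mn nf_coeffs_def algebra_simps)
    have "Pl p M \<in> subalg_expr S" using p(1) M(1) by (rule subalg_expr.plus)
    moreover have "central f (rep f (Pl p M))" using p(2) M(2) by (simp add: central_add)
    moreover have "deg_le T (nf_coeffs f (Mn e (Pl p M)))"
      using deg_p lead by (simp add: v' deg_le_def lead_term_def)
    moreover have "\<forall>i<Suc j. i \<le> T \<longrightarrow> nf_coeffs f (Mn e (Pl p M)) i (T - i) = 0"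
      using below_j lead by (auto simp: v' lead_term_def less_Suc_eq)
    ultimately show ?thesis by blast
  qed
qed

lemma peel:
  assumes H: "realizes_lead_terms f S"
  shows "central f (rep f e) \<Longrightarrow> deg_le T (nf_coeffs f e) \<Longrightarrow> \<exists>p\<in>subalg_expr S. rep f e = rep f p"
proof (induction T arbitrary: e)
  case 0
  then obtain p where p: "p \<in> subalg_expr S" "deg_le 0 (nf_coeffs f (Mn e p))"
    "nf_coeffs f (Mn e p) 0 0 = 0"
    using clear_antidiagonal[OF H, of e 0 "Suc 0"] by auto
  have "nf_coeffs f (Mn e p) a b = 0" for a b
    using p(2,3) by (cases "a + b = 0") (auto simp: deg_le_def)
  moreover have "nf_coeffs f (Sc 0) = 0"
    by (simp add: nf_coeffs_def scal_0)
  ultimately have "nf_coeffs f (Mn e p) = nf_coeffs f (Sc 0)"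
    by (simp add: fun_eq_iff)
  then have "rep f (Mn e p) = rep f (Sc 0)" by (rule nf_coeffs_inj)
  then show ?case using p(1) by (auto simp: scal_0)
next
  case (Suc T)
  obtain p where p: "p \<in> subalg_expr S" "central f (rep f p)"
    and deg: "deg_le (Suc T) (nf_coeffs f (Mn e p))"
    and top: "\<forall>i\<le>Suc T. nf_coeffs f (Mn e p) i (Suc T - i) = 0"
    using clear_antidiagonal[OF H Suc.prems, of "Suc (Suc T)"] by auto
  have "deg_le T (nf_coeffs f (Mn e p))"
    unfolding deg_le_def
  proof (intro allI impI)
    fix a b assume "T < a + b"
    then consider "Suc T < a + b" | "a \<le> Suc T" "b = Suc T - a" by linarith
    then show "nf_coeffs f (Mn e p) a b = 0"
      by cases (use deg top in \<open>auto simp: deg_le_def\<close>)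
  qed
  moreover have "central f (rep f (Mn e p))" using Suc.prems(1) p(2) by (simp add: central_diff)
  ultimately obtain q where "q \<in> subalg_expr S" "rep f (Mn e p) = rep f q"
    using Suc.IH by blast
  then have "Pl q p \<in> subalg_expr S" "rep f e = rep f (Pl q p)"
    using p(1) by (auto intro: subalg_expr.plus simp: diff_eq_eq)
  then show ?case by blast
qed

theorem center_H_eq_gen_subalg:
  assumes H: "realizes_lead_terms f S" and S: "\<And>s. s \<in> S \<Longrightarrow> central f (rep f s)"
  shows "center_H f = gen_subalg f S"
proof (intro set_eqI iffI)
  fix e assume "e \<in> center_H f"
  then have ce: "central f (rep f e)" by (simp add: center_H_eq)
  obtain T where "deg_le T (nf_coeffs f e)" using nf_coeffs_deg_le by blast
  then show "e \<in> gen_subalg f S"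
    using peel[OF H ce] by (simp add: gen_subalg_eq)
next
  fix e assume "e \<in> gen_subalg f S"
  then obtain p where p: "p \<in> subalg_expr S" and eq: "rep f e = rep f p"
    by (auto simp: gen_subalg_eq)
  show "e \<in> center_H f"
    using central_subalg[OF p S] eq by (simp add: center_H_eq)
qed

section \<open>The generic case\<close>

definition exceptional :: "complex poly \<Rightarrow> bool" where
  "exceptional f \<longleftrightarrow> (\<exists>c w l. primitive_root w l \<and> f = [:(1 - w) * c, w:])"

lemma primitive_root_exists:
  fixes a :: complex
  assumes "a ^ k = 1" "0 < k"
  shows "\<exists>l. primitive_root a l"
proof -
  let ?l = "LEAST n. 0 < n \<and> a ^ n = 1"
  have "0 < ?l \<and> a ^ ?l = 1" using assms by (metis (mono_tags, lifting) LeastI)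
  moreover have "\<forall>k. 0 < k \<and> k < ?l \<longrightarrow> a ^ k \<noteq> 1"
    using not_less_Least by blast
  ultimately show ?thesis unfolding primitive_root_def by blast
qed

lemma not_exceptional_linear:
  assumes "\<not> exceptional [:b, a:]"
  shows "(a = 1 \<longrightarrow> b \<noteq> 0) \<and> (a \<noteq> 1 \<longrightarrow> (\<forall>k>0. a ^ k \<noteq> 1))"
proof (intro conjI impI allI notI)
  assume "a = 1" "b = 0"
  then have "primitive_root a 1 \<and> [:b, a:] = [:(1 - a) * 0, a:]"
    by (auto simp: primitive_root_def)
  then show False using assms unfolding exceptional_def by blast
next
  fix k :: nat
  assume "a \<noteq> 1" "0 < k" "a ^ k = 1"
  then obtain l where "primitive_root a l" using primitive_root_exists by blast
  moreover have "[:b, a:] = [:(1 - a) * (b / (1 - a)), a:]"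
    using \<open>a \<noteq> 1\<close> by simp
  ultimately show False using assms unfolding exceptional_def by blast
qed

lemma degree_1_linear: "degree p = 1 \<Longrightarrow> p = [:coeff p 0, coeff p 1:]"
  by (auto simp: poly_eq_iff coeff_pCons coeff_eq_0 split: nat.split)

lemma comp_iter_linear: "comp_iter [:b, a:] k = [:b * (\<Sum>j<k. a ^ j), a ^ k:]"
proof (induction k)
  case 0
  then show ?case by simp
next
  case (Suc k)
  have "(\<Sum>j<Suc k. a ^ j) = 1 + a * (\<Sum>j<k. a ^ j)"
    by (simp only: sum.lessThan_Suc_shift power_0 power_Suc sum_distrib_left)
  then show ?case by (simp add: Suc.IH pcompose_pCons algebra_simps)
qed

lemma degree_comp_iter: "degree (comp_iter f k) = degree f ^ k"
  by (induction k) (simp_all add: degree_pcompose)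

lemma comp_iter_neq_X:
  assumes "\<not> exceptional f" "0 < k"
  shows "comp_iter f k \<noteq> [:0, 1:]"
proof -
  obtain n where k: "k = Suc n" using assms(2) by (cases k) auto
  consider "degree f = 0" | "degree f = 1" | "degree f \<ge> 2" by linarith
  then show ?thesis
  proof cases
    case 1
    then obtain a where "f = [:a:]" by (elim degree_eq_zeroE)
    then show ?thesis by (simp add: k)
  next
    case 2
    obtain b a where f: "f = [:b, a:]" using degree_1_linear[OF 2] by blast
    then have "(a = 1 \<longrightarrow> b \<noteq> 0) \<and> (a \<noteq> 1 \<longrightarrow> (\<forall>k>0. a ^ k \<noteq> 1))"
      using assms(1) by (simp add: not_exceptional_linear)
    moreover have "comp_iter f k = [:b * (\<Sum>j<k. a ^ j), a ^ k:]"
      by (simp add: f comp_iter_linear)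
    ultimately show ?thesis using assms(2) by (cases "a = 1") simp_all
  next
    case 3
    have "degree f \<le> degree f ^ k" using 3 assms(2) by (simp add: self_le_power)
    then have "degree (comp_iter f k) \<ge> 2" using 3 by (simp add: degree_comp_iter)
    then show ?thesis by auto
  qed
qed

lemma periodic_poly_const:
  fixes p :: "'a::{idom, ring_char_0} poly"
  assumes "b \<noteq> 0" and periodic: "\<And>x. poly p (x + b) = poly p x"
  shows "degree p = 0"
proof (rule ccontr)
  assume "degree p \<noteq> 0"
  then have "p - [:poly p 0:] \<noteq> 0" by (metis degree_pCons_0 eq_iff_diff_eq_0)
  then have "finite {x. poly (p - [:poly p 0:]) x = 0}" by (rule poly_roots_finite)
  moreover have "poly p (of_nat n * b) = poly p 0" for n
    by (induction n) (simp_all add: algebra_simps, metis periodic add.commute)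
  then have "range (\<lambda>n::nat. of_nat n * b) \<subseteq> {x. poly (p - [:poly p 0:]) x = 0}"
    by auto
  moreover have "infinite (range (\<lambda>n::nat. of_nat n * b))"
    using assms(1) by (intro range_inj_infinite) (auto simp: inj_def)
  ultimately show False using finite_subset by blast
qed

lemma fixed_by_linear_const:
  assumes "\<not> exceptional [:b, a:]" "a \<noteq> 0" and fixed: "pcompose p [:b, a:] = p"
  shows "degree p = 0"
proof (rule ccontr)
  assume dp: "degree p \<noteq> 0"
  have c: "(a = 1 \<longrightarrow> b \<noteq> 0) \<and> (a \<noteq> 1 \<longrightarrow> (\<forall>k>0. a ^ k \<noteq> 1))"
    using assms(1) by (rule not_exceptional_linear)
  have "lead_coeff (pcompose p [:b, a:]) = lead_coeff p * a ^ degree p"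
    using assms(2) by (subst lead_coeff_comp) simp_all
  then have "lead_coeff p * a ^ degree p = lead_coeff p" using fixed by simp
  moreover have "lead_coeff p \<noteq> 0" using dp by auto
  ultimately have "a ^ degree p = 1" by simp
  then have a: "a = 1" using c dp by (cases "a = 1") simp_all
  then have "b \<noteq> 0" using c by simp
  moreover have "poly p (x + b) = poly p x" for x
    using arg_cong[OF fixed, of "\<lambda>q. poly q x"] a by (simp add: poly_pcompose add.commute)
  ultimately have "degree p = 0" by (rule periodic_poly_const)
  then show False using dp by simp
qed

lemma fixed_poly_const:
  assumes "\<not> exceptional f" "pcompose p f = p"
  shows "degree p = 0"
proof -
  consider "degree f = 0" | "degree f = 1" | "degree f \<ge> 2" by linarith
  then show ?thesis
  proof cases
    case 1
    then obtain a where "f = [:a:]" by (elim degree_eq_zeroE)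
    then have "pcompose p f = [:poly p a:]" by (simp add: pcompose_pCons_0)
    then show ?thesis using assms(2) by (metis degree_pCons_0)
  next
    case 2
    obtain b a where f: "f = [:b, a:]" using degree_1_linear[OF 2] by blast
    then have "a \<noteq> 0" using 2 by auto
    then show ?thesis using fixed_by_linear_const[of b a p] assms by (simp add: f)
  next
    case 3
    have "degree p = degree p * degree f"
      using degree_pcompose[of p f] by (simp only: assms(2))
    then show ?thesis using 3 by simp
  qed
qed

lemma generic_central_coeffs_diagonal:
  assumes "\<not> exceptional f" "central f (rep f e)" "nf_coeffs f e a b \<noteq> 0"
  shows "a = b"
proof -
  let ?v = "nf_coeffs f e"
  note eqs = central_coeff_eqs[OF assms(2)]
  have nonzero: "comp_iter f (Suc n) - [:0, 1:] \<noteq> 0" for n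
    using comp_iter_neq_X[OF assms(1), of "Suc n"] by simp
  have off: "\<forall>d. ?v m (m + Suc d) = 0 \<and> ?v (m + Suc d) m = 0" for m
  proof (induction m)
    case 0
    show ?case using eqs(2) eqs(3) nonzero by (simp add: mult_eq_0_iff del: comp_iter.simps)
  next
    case (Suc m)
    show ?case
    proof
      fix d
      have "?v (Suc m) (Suc (m + Suc d)) = 0"
        using eqs(1)[of m "m + Suc d"] Suc.IH nonzero by (simp del: comp_iter.simps)
      moreover have "?v (Suc (m + Suc d)) (Suc m) = 0"
        using eqs(1)[of "m + Suc d" m] Suc.IH nonzero by (simp del: comp_iter.simps)
      ultimately show "?v (Suc m) (Suc m + Suc d) = 0 \<and> ?v (Suc m + Suc d) (Suc m) = 0" by simp
    qed
  qed
  show "a = b"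
  proof (rule ccontr)
    assume "a \<noteq> b"
    then consider "a < b" | "b < a" by linarith
    then show False
    proof cases
      case 1
      then have "b = a + Suc (b - a - 1)" by simp
      then show False using off[of a] assms(3) by metis
    next
      case 2
      then have "a = b + Suc (a - b - 1)" by simp
      then show False using off[of b] assms(3) by metis
    qed
  qed
qed

lemma generic_realizes_lead_terms:
  assumes "\<not> exceptional f"
  shows "realizes_lead_terms f {ez}"
  unfolding realizes_lead_terms_def
proof (intro allI impI, elim conjE)
  fix e T i
  assume ce: "central f (rep f e)" and deg: "deg_le T (nf_coeffs f e)" and "i \<le> T"
    and nz: "nf_coeffs f e i (T - i) \<noteq> 0"
  let ?p = "nf_coeffs f e i i"
  have "T - i = i" using generic_central_coeffs_diagonal[OF assms ce nz] by simp
  then have T: "T = 0 + 2 * i" using \<open>i \<le> T\<close> by simp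
  have "nf_coeffs f e (Suc i) (Suc i) = 0" using deg T by (simp add: deg_le_def)
  then have "pcompose ?p f = ?p" using central_coeff_eqs(1)[OF ce, of i i] by simp
  then have "degree ?p = 0" by (rule fixed_poly_const[OF assms])
  then obtain c where c: "?p = [:c:]" by (elim degree_eq_zeroE)
  let ?M = "Tm (epow ez i) (Sc c)"
  have "?M \<in> subalg_expr {ez}"
    by (intro subalg_expr.times epow_subalg_expr subalg_expr.base subalg_expr.scal) simp
  moreover have "central f (rep f ?M)"
    by (simp add: rep_ez central_mult central_power central_Z central_scal)
  moreover have "nf_coeffs f ?M = app (Z_op f ^ i * X_op ^ 0 * P_op f [:c:]) unit_arr"
    by (simp add: nf_coeffs_def rep_ez P_op_const)
  then have "lead_term T i ?p (nf_coeffs f ?M)"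
    using lead_term_Z_pow_X_pow_P_op[of "[:c:]" f 0 i] T c by simp
  ultimately have "\<exists>M\<in>subalg_expr {ez}. central f (rep f M) \<and> lead_term T i ?p (nf_coeffs f M)"
    by blast
  then show "\<exists>M\<in>subalg_expr {ez}. central f (rep f M) \<and> lead_term T i (nf_coeffs f e i (T - i))
      (nf_coeffs f M)"
    using \<open>T - i = i\<close> by simp
qed

theorem center_H_generic: "\<not> exceptional f \<Longrightarrow> center_H f = gen_subalg f {ez}"
  using center_H_eq_gen_subalg[OF generic_realizes_lead_terms] by (simp add: rep_ez central_Z)

section \<open>The exceptional case\<close>

lemma primitive_root_dvd:
  assumes "primitive_root w l" "w ^ n = 1"
  shows "l dvd n"
proof -
  have l: "0 < l" "w ^ l = 1" using assms(1) by (auto simp: primitive_root_def)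
  have "w ^ n = w ^ (l * (n div l) + n mod l)" by simp
  also have "\<dots> = (w ^ l) ^ (n div l) * w ^ (n mod l)" by (simp only: power_add power_mult)
  finally have "w ^ n = (w ^ l) ^ (n div l) * w ^ (n mod l)" .
  then have "w ^ (n mod l) = 1" using assms(2) l by simp
  moreover have "n mod l < l" using l by simp
  ultimately have "n mod l = 0" using assms(1) unfolding primitive_root_def by auto
  then show ?thesis by (simp add: dvd_eq_mod_eq_0)
qed

lemma primitive_root_power_eq_dvd:
  assumes "primitive_root w l" "w ^ a = w ^ b" "b \<le> a"
  shows "l dvd (a - b)"
proof -
  have "w \<noteq> 0"
  proof
    assume "w = 0"
    then show False using assms(1) by (auto simp: primitive_root_def power_0_left)
  qed
  moreover have "w ^ b * w ^ (a - b) = w ^ b * 1"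
    using assms(2,3) by (simp flip: power_add)
  ultimately have "w ^ (a - b) = 1" by simp
  then show ?thesis by (rule primitive_root_dvd[OF assms(1)])
qed

lemma pcompose_power: "pcompose (p ^ n) q = pcompose p q ^ n" for p q :: "'a::comm_semiring_1 poly"
  by (induction n) (simp_all add: pcompose_mult pcompose_1)

lemma central_P_op_fixed: "pcompose q f = q \<Longrightarrow> central f (P_op f q)"
  using P_op_X[of f q] Y_P_op[of f q] P_op_commute[of f q "[:0, 1:]"] by (simp add: central_def)

context
  fixes f :: "complex poly" and w :: complex and l :: nat and c :: complex
  assumes root: "primitive_root w l" and f_def: "f = [:(1 - w) * c, w:]"
begin

lemma order_pos: "0 < l" and power_order: "w ^ l = 1"
  using root by (auto simp: primitive_root_def)

lemma comp_iter_exceptional: "comp_iter f n = [:(1 - w ^ n) * c, w ^ n:]"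
  by (induction n) (simp_all add: f_def pcompose_pCons algebra_simps)

lemma comp_iter_order: "comp_iter f l = [:0, 1:]"
  by (simp add: comp_iter_exceptional power_order)

abbreviation h_minus_c :: "complex poly" where
  "h_minus_c \<equiv> [:- c, 1:]"

lemma h_minus_c_power_fixed: "pcompose (h_minus_c ^ l) f = h_minus_c ^ l"
proof -
  have "pcompose h_minus_c f = smult w h_minus_c"
    by (simp add: f_def pcompose_pCons algebra_simps)
  then have "pcompose (h_minus_c ^ l) f = smult (w ^ l) (h_minus_c ^ l)"
    by (simp only: pcompose_power smult_power)
  then show ?thesis by (simp add: power_order)
qed

lemma central_X_power: "central f (X_op ^ l)"
proof -
  obtain n where n: "l = Suc n" using order_pos by (cases l) auto
  have "Y_op f * X_op ^ l = X_op ^ l * Y_op f"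
    using Y_X_pow[of f n] by (simp add: n[symmetric] comp_iter_order P_op_0)
  moreover have "H_op f * X_op ^ l = X_op ^ l * H_op f"
    using P_op_X_pow[of f "[:0, 1:]" l] by (simp add: pcompose_X_left comp_iter_order)
  ultimately show ?thesis by (simp add: central_def power_commutes)
qed

lemma central_Y_power: "central f (Y_op f ^ l)"
proof -
  obtain n where n: "l = Suc n" using order_pos by (cases l) auto
  have "Y_op f ^ l * X_op = X_op * Y_op f ^ l"
    using Y_pow_X[of f n] by (simp add: n[symmetric] comp_iter_order P_op_0)
  moreover have "Y_op f ^ l * H_op f = H_op f * Y_op f ^ l"
    using Y_pow_P_op[of f l "[:0, 1:]"] by (simp add: pcompose_X_left comp_iter_order)
  ultimately show ?thesis by (simp add: central_def power_commutes)
qed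

lemma rep_h_minus_c: "rep f (Mn eh (Sc c)) = P_op f h_minus_c"
proof -
  have "P_op f h_minus_c = P_op f ([:0, 1:] - [:c:])" by simp
  also have "\<dots> = H_op f - scal c" by (simp only: P_op_diff P_op_const)
  finally show ?thesis by simp
qed

definition root_gens :: "fexpr set" where
  "root_gens = {epow ex l, epow ey l, epow (Mn eh (Sc c)) l, ez}"

lemma central_root_gens: "s \<in> root_gens \<Longrightarrow> central f (rep f s)"
  unfolding root_gens_def
proof (elim insertE)
  assume "s = epow (Mn eh (Sc c)) l"
  then show ?thesis
    using central_P_op_fixed[OF h_minus_c_power_fixed]
    by (simp only: rep_epow rep_h_minus_c P_op_power)
qed (auto simp: central_X_power central_Y_power rep_ez central_Z)

lemma fixed_poly_subalg:
  assumes fixed: "pcompose p f = p"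
  shows "\<exists>P\<in>subalg_expr root_gens. rep f P = P_op f p"
proof -
  let ?q = "pcompose p [:c, 1:]"
  have "pcompose ?q [:0, w:] = pcompose p (pcompose [:c, 1:] [:0, w:])"
    by (simp add: pcompose_assoc)
  also have "pcompose [:c, 1:] [:0, w:] = pcompose f [:c, 1:]"
    by (simp add: f_def pcompose_pCons algebra_simps)
  also have "pcompose p (pcompose f [:c, 1:]) = ?q" by (simp add: pcompose_assoc fixed)
  finally have q_fixed: "pcompose ?q [:0, w:] = ?q" .
  have dvd: "l dvd j" if "coeff ?q j \<noteq> 0" for j
  proof -
    have "w ^ j * coeff ?q j = coeff ?q j"
      using q_fixed coeff_pcompose_linear[of ?q w j] by simp
    then have "w ^ j = 1" using that by simp
    then show ?thesis by (rule primitive_root_dvd[OF root])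
  qed
  let ?E = "\<lambda>j. epow (epow (Mn eh (Sc c)) l) (j div l)"
  let ?P = "lin_comb (coeff ?q) ?E [0..<Suc (degree ?q)]"
  have P_sub: "?P \<in> subalg_expr root_gens"
    by (intro lin_comb_subalg_expr epow_subalg_expr subalg_expr.base) (simp add: root_gens_def)
  have term_eq: "scal (coeff ?q j) * rep f (?E j) = scal (coeff ?q j) * P_op f h_minus_c ^ j" for j
  proof (cases "coeff ?q j = 0")
    case True
    then show ?thesis by (simp add: scal_0)
  next
    case False
    then have "l * (j div l) = j" using dvd by simp
    then show ?thesis by (simp only: rep_epow rep_h_minus_c power_mult[symmetric])
  qed
  have "rep f ?P = (\<Sum>j\<leftarrow>[0..<Suc (degree ?q)]. scal (coeff ?q j) * P_op f h_minus_c ^ j)"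
    by (simp only: rep_lin_comb term_eq)
  also have "\<dots> = P_op f (pcompose ?q h_minus_c)"
    by (rule sum_scal_P_op_power) simp
  also have "pcompose ?q h_minus_c = p"
    by (simp add: pcompose_assoc[symmetric] pcompose_pCons)
  finally show ?thesis using P_sub by blast
qed

lemma gens_subalg_expr:
  "epow ex l \<in> subalg_expr root_gens" "epow ey l \<in> subalg_expr root_gens" "ez \<in> subalg_expr
      root_gens"
  by (auto intro: subalg_expr.base simp: root_gens_def)

lemma lead_term_in_subalg_X:
  assumes "k \<le> i" "l dvd (i - k)" "P \<in> subalg_expr root_gens" "rep f P = P_op f p"
    "pcompose p f = p"
  shows "\<exists>M\<in>subalg_expr root_gens. central f (rep f M) \<and> lead_term (i + k) i p (nf_coeffs f M)"
proof -
  let ?M = "Tm (epow ez k) (Tm (epow (epow ex l) ((i - k) div l)) P)"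
  have M: "?M \<in> subalg_expr root_gens"
    by (intro subalg_expr.times epow_subalg_expr gens_subalg_expr assms(3))
  moreover have "central f (rep f ?M)"
    using central_subalg[OF M central_root_gens] .
  moreover have nf: "nf_coeffs f ?M = app (Z_op f ^ k * X_op ^ (i - k) * P_op f p) unit_arr"
    using assms(2) by (simp add: nf_coeffs_def rep_ez assms(4) power_mult[symmetric] mult.assoc)
  have e: "i - k + 2 * k = i + k" "i - k + k = i" using assms(1) by simp_all
  have "lead_term (i + k) i p (nf_coeffs f ?M)"
    using lead_term_Z_pow_X_pow_P_op[OF assms(5), of "i - k" k] unfolding nf by (simp only: e)
  ultimately show ?thesis by blast
qed

lemma lead_term_in_subalg_Y:
  assumes "i \<le> k" "l dvd (k - i)" "P \<in> subalg_expr root_gens" "rep f P = P_op f p"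
    "pcompose p f = p"
  shows "\<exists>M\<in>subalg_expr root_gens. central f (rep f M) \<and> lead_term (i + k) i p (nf_coeffs f M)"
proof -
  let ?M = "Tm (epow ez i) (Tm (epow (epow ey l) ((k - i) div l)) P)"
  have M: "?M \<in> subalg_expr root_gens"
    by (intro subalg_expr.times epow_subalg_expr gens_subalg_expr assms(3))
  moreover have "central f (rep f ?M)"
    using central_subalg[OF M central_root_gens] .
  moreover have nf: "nf_coeffs f ?M = app (Z_op f ^ i * Y_op f ^ (k - i) * P_op f p) unit_arr"
    using assms(2) by (simp add: nf_coeffs_def rep_ez assms(4) power_mult[symmetric] mult.assoc)
  have e: "k - i + 2 * i = i + k" using assms(1) by simp
  have "lead_term (i + k) i p (nf_coeffs f ?M)"
    using lead_term_Z_pow_Y_pow_P_op[OF assms(5), of "k - i" i] unfolding nf by (simp only: e)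
  ultimately show ?thesis by blast
qed

lemma exceptional_realizes_lead_terms: "realizes_lead_terms f root_gens"
  unfolding realizes_lead_terms_def
proof (intro allI impI, elim conjE)
  fix e T i
  assume ce: "central f (rep f e)" and deg: "deg_le T (nf_coeffs f e)" and "i \<le> T"
    and nz: "nf_coeffs f e i (T - i) \<noteq> 0"
  define k where "k = T - i"
  let ?p = "nf_coeffs f e i k"
  have T: "T = i + k" using \<open>i \<le> T\<close> by (simp add: k_def)
  have "nf_coeffs f e (Suc i) (Suc k) = 0" using deg T by (simp add: deg_le_def)
  then have fixed: "pcompose ?p f = ?p" using central_coeff_eqs(1)[OF ce, of i k] by simp
  have "(comp_iter f i - comp_iter f k) * ?p = 0"
    using central_coeff_eqs(4)[OF ce, of i k] by (simp add: algebra_simps)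
  then have "comp_iter f i = comp_iter f k" using nz by (simp add: k_def)
  then have "w ^ i = w ^ k" by (simp add: comp_iter_exceptional)
  obtain P where P: "P \<in> subalg_expr root_gens" "rep f P = P_op f ?p"
    using fixed_poly_subalg[OF fixed] by blast
  have "\<exists>M\<in>subalg_expr root_gens. central f (rep f M) \<and> lead_term (i + k) i ?p (nf_coeffs f M)"
  proof (cases "k \<le> i")
    case True
    then have "l dvd (i - k)"
      by (rule primitive_root_power_eq_dvd[OF root \<open>w ^ i = w ^ k\<close>])
    then show ?thesis by (rule lead_term_in_subalg_X[OF True _ P fixed])
  next
    case False
    then have "i \<le> k" by simp
    then have "l dvd (k - i)"
      by (rule primitive_root_power_eq_dvd[OF root \<open>w ^ i = w ^ k\<close>[symmetric]])
    then show ?thesis by (rule lead_term_in_subalg_Y[OF \<open>i \<le> k\<close> _ P fixed])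
  qed
  then show "\<exists>M\<in>subalg_expr root_gens.
      central f (rep f M) \<and> lead_term T i (nf_coeffs f e i (T - i)) (nf_coeffs f M)"
    using T by simp
qed

theorem center_H_exceptional:
  "center_H f = gen_subalg f {epow ex l, epow ey l, epow (Mn eh (Sc c)) l, ez}"
  using center_H_eq_gen_subalg[OF exceptional_realizes_lead_terms central_root_gens]
  by (simp add: root_gens_def)

end

theorem theorem4:
  fixes f :: "complex poly"
  shows "(\<forall>c w l. primitive_root w l \<and> f = [:(1 - w) * c, w:] \<longrightarrow>
            center_H f = gen_subalg f {epow ex l, epow ey l, epow (Mn eh (Sc c)) l, ez})
     \<and> ((\<nexists>c w l. primitive_root w l \<and> f = [:(1 - w) * c, w:]) \<longrightarrow>
            center_H f = gen_subalg f {ez})"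
  using center_H_exceptional center_H_generic unfolding exceptional_def by blast

end
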